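(* Let $K\ge2$, let $\mathbf{p}$ be a probability vector on $[K]$ with all $p_k>0$, and let $\mathbf{W},\mathbf{W}'$ be $K\times K$ invertible row-stochastic matrices. Then $$\alpha_{f\text{-DIV}}(\mathbf{p},\mathbf{W}\mathbf{W}')\ge\alpha_{f\text{-DIV}}(\mathbf{p},\mathbf{W}),\quad \alpha_{\rm MSE}(\mathbf{p},\mathbf{W}\mathbf{W}')\ge\alpha_{\rm MSE}(\mathbf{p},\mathbf{W}),\quad \alpha_{\rm TV}(\mathbf{p},\mathbf{W}\mathbf{W}')\ge\alpha_{\rm TV}(\mathbf{p},\mathbf{W}),$$ each with equality if and only if $\mathbf{W}'$ is a permutation matrix.
   Context: For a $K\times K$ invertible row-stochastic $\mathbf{V}$: $X_1,\dots,X_n$ i.i.d. with law $\mathbf{p}$, each passed independently through $\mathbf{V}$ ($\Pr\{Y_i=\ell\mid X_i=k\}=V_{k,\ell}$), giving $\mathbf{y}_n$ with empirical distribution $\mathbf{t}(\mathbf{y}_n)$; $\hat{\mathbf{p}}_n=\mathrm{Proj}_{\mathbb{P}}(\mathbf{t}(\mathbf{y}_n)\mathbf{V}^{-1})$, where $\mathrm{Proj}_{\mathbb{P}}$ is a fixed map from vectors with entries summing to one into the probability simplex $\mathbb{P}$ with $\mathrm{Proj}_{\mathbb{P}}(\mathbf{v})=\mathbf{v}$ for $\mathbf{v}\in\mathbb{P}$. Losses: $\mathscr{L}^{(n)}_{f\text{-DIV}}(\mathbf{p},\mathbf{V})=\mathbb{E}[\sum_kp_kf(\hat p_{n,k}/p_k)]$,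 $\mathscr{L}^{(n)}_{\rm MSE}(\mathbf{p},\mathbf{V})=\mathbb{E}\Vert\hat{\mathbf{p}}_n-\mathbf{p}\Vert_2^2$, $\mathscr{L}^{(n)}_{\rm TV}(\mathbf{p},\mathbf{V})=\mathbb{E}\Vert\hat{\mathbf{p}}_n-\mathbf{p}\Vert_1$. Normalized asymptotic losses: $\alpha_{f\text{-DIV}}(\mathbf{p},\mathbf{V})=\lim_n\mathscr{L}^{(n)}_{f\text{-DIV}}(\mathbf{p},\mathbf{V})/\mathscr{L}^{(n)}_{f\text{-DIV}}(\mathbf{p},\mathbf{I})$, $\alpha_{\rm MSE}(\mathbf{p},\mathbf{V})=\lim_n\mathscr{L}^{(n)}_{\rm MSE}(\mathbf{p},\mathbf{V})/\mathscr{L}^{(n)}_{\rm MSE}(\mathbf{p},\mathbf{I})$, $\alpha_{\rm TV}(\mathbf{p},\mathbf{V})=\lim_n\big(\mathscr{L}^{(n)}_{\rm TV}(\mathbf{p},\mathbf{V})/\mathscr{L}^{(n)}_{\rm TV}(\mathbf{p},\mathbf{I})\big)^2$, with $\mathbf{I}$ the identity matrix. The function $f$ is convex on $[0,\infty)$ with $f(1)=0$, $f(0)$ finite, four times differentiable at $1$ with $f(x)=\sum_{\rho=1}^4\frac{f^{(\rho)}(1)}{\rho!}(x-1)^\rho+O(|x-1|^{4+\gamma})$ as $x\to1$ for some $\gamma>0$, $f''(1)>0$, and strictly convex at $1$ (i.e. $f(\lambda(1-\epsilon)+(1-\lambda)(1+\epsilon'))<\lambda f(1-\epsilon)+(1-\lambda)f(1+\epsilon')$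 for all $\epsilon,\epsilon'>0$, $\lambda\in(0,1)$). *)

theory Defs
  imports "HOL-Analysis.Analysis" "HOL-Library.Landau_Symbols"
begin

text \<open>Index set [K] is the finite type 'k; vectors are real^'k (row vectors),
  matrices real^'k^'k with entry V$k$l; row vector times matrix is v*.\<close>

definition prob_vec :: "real^'k::finite \<Rightarrow> bool" where
  "prob_vec v \<longleftrightarrow> (\<forall>k. 0 \<le> v$k) \<and> sum (\<lambda>k. v$k) UNIV = 1"

definition row_stochastic :: "real^'k::finite^'k \<Rightarrow> bool" where
  "row_stochastic V \<longleftrightarrow> (\<forall>k l. 0 \<le> V$k$l) \<and> (\<forall>k. sum (\<lambda>l. V$k$l) UNIV = 1)"

definition permutation_matrix :: "real^'k::finite^'k \<Rightarrow> bool" where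
  "permutation_matrix V \<longleftrightarrow>
     (\<exists>\<sigma>. \<sigma> permutes (UNIV::'k set) \<and> V = (\<chi> i j. if \<sigma> i = j then 1 else 0))"

definition valid_proj :: "(real^'k::finite \<Rightarrow> real^'k) \<Rightarrow> bool" where
  "valid_proj Proj \<longleftrightarrow>
     (\<forall>v. sum (\<lambda>k. v$k) UNIV = 1 \<longrightarrow> prob_vec (Proj v)) \<and>
     (\<forall>v. prob_vec v \<longrightarrow> Proj v = v)"

definition emp_dist :: "'k::finite list \<Rightarrow> real^'k" where
  "emp_dist ys = (\<chi> l. real (length (filter (\<lambda>y. y = l) ys)) / real (length ys))"

definition seq_prob :: "real^'k::finite \<Rightarrow> 'k list \<Rightarrow> real" where
  "seq_prob q ys = prod_list (map (\<lambda>y. q$y) ys)"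

definition p_hat :: "(real^'k::finite \<Rightarrow> real^'k) \<Rightarrow> real^'k^'k \<Rightarrow> 'k list \<Rightarrow> real^'k" where
  "p_hat Proj V ys = Proj (emp_dist ys v* matrix_inv V)"

definition expected_loss ::
  "(real^'k::finite \<Rightarrow> real^'k) \<Rightarrow> real^'k \<Rightarrow> real^'k^'k \<Rightarrow> nat \<Rightarrow> (real^'k \<Rightarrow> real) \<Rightarrow> real" where
  "expected_loss Proj p V n g =
     (\<Sum>ys\<in>{ys. set ys \<subseteq> UNIV \<and> length ys = n}. seq_prob (p v* V) ys * g (p_hat Proj V ys))"

definition loss_fdiv where
  "loss_fdiv f Proj p V n = expected_loss Proj p V n (\<lambda>ph. \<Sum>k\<in>UNIV. p$k * f (ph$k / p$k))"

definition loss_mse where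
  "loss_mse Proj p V n = expected_loss Proj p V n (\<lambda>ph. \<Sum>k\<in>UNIV. (ph$k - p$k)^2)"

definition loss_tv where
  "loss_tv Proj p V n = expected_loss Proj p V n (\<lambda>ph. \<Sum>k\<in>UNIV. \<bar>ph$k - p$k\<bar>)"

definition alpha_fdiv where
  "alpha_fdiv f Proj p V = lim (\<lambda>n. loss_fdiv f Proj p V n / loss_fdiv f Proj p (mat 1) n)"

definition alpha_mse where
  "alpha_mse Proj p V = lim (\<lambda>n. loss_mse Proj p V n / loss_mse Proj p (mat 1) n)"

definition alpha_tv where
  "alpha_tv Proj p V = lim (\<lambda>n. (loss_tv Proj p V n / loss_tv Proj p (mat 1) n)^2)"

definition admissible_f :: "(real \<Rightarrow> real) \<Rightarrow> bool" where
  "admissible_f f \<longleftrightarrow>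
     convex_on {0..} f \<and> f 1 = 0 \<and>
     (\<forall>\<rho><3. eventually (\<lambda>x. (deriv ^^ \<rho>) f differentiable (at x)) (nhds 1)) \<and>
     (deriv ^^ 3) f differentiable (at 1) \<and>
     (\<exists>\<gamma>>0. (\<lambda>x. f x - (\<Sum>\<rho>=1..4. (deriv ^^ \<rho>) f 1 / fact \<rho> * (x - 1) ^ \<rho>))
                \<in> O[at 1](\<lambda>x. \<bar>x - 1\<bar> powr (4 + \<gamma>))) \<and>
     (deriv ^^ 2) f 1 > 0 \<and>
     (\<forall>\<epsilon> \<epsilon>' t. 0 < \<epsilon> \<and> \<epsilon> \<le> 1 \<and> 0 < \<epsilon>' \<and> 0 < t \<and> t < 1 \<longrightarrow>
        f (t * (1 - \<epsilon>) + (1 - t) * (1 + \<epsilon>')) < t * f (1 - \<epsilon>) + (1 - t) * f (1 + \<epsilon>'))"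

end

theory Submission
  imports Defs "HOL-Probability.Probability" "HOL-Real_Asymp.Real_Asymp"
begin

text \<open>The unprojected estimate \<open>t(y\<^sub>n) V\<^sup>-\<^sup>1\<close> is \<open>p + dev\<close>, where \<open>dev k\<close> is the sample
  mean of the centred scores \<open>V\<^sup>-\<^sup>1\<^sub>y\<^sub>k - p\<^sub>k\<close> of observations with law \<open>p V\<close>. Where all
  \<open>|dev k| \<le> min p\<close> the projection is the identity and the three losses equal, up to
  \<open>O(|dev|\<^sup>3)\<close>, \<open>\<Sum> dev\<^sub>k\<^sup>2\<close>, \<open>\<Sum> |dev\<^sub>k|\<close> and \<open>f''(1)/2 \<Sum> dev\<^sub>k\<^sup>2/p\<^sub>k\<close>; elsewhere they are bounded
  and the fourth moment of \<open>dev\<close> makes that event negligible. Hence \<open>n\<close> MSE, \<open>sqrt n\<close> TV and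
  \<open>n\<close> f-DIV converge to \<open>\<Sum> \<sigma>\<^sub>k\<^sup>2\<close>, \<open>sqrt(2/\<pi>) \<Sum> \<sigma>\<^sub>k\<close> (central limit theorem) and
  \<open>f''(1)/2 \<Sum> \<sigma>\<^sub>k\<^sup>2/p\<^sub>k\<close>, where \<open>\<sigma>\<^sub>k\<^sup>2\<close> is the variance of the \<open>k\<close>-th score, equal to
  \<open>p\<^sub>k (1 - p\<^sub>k)\<close> for the identity channel. For a composite channel \<open>W W'\<close> the law of total
  variance gives \<open>\<sigma>\<^sub>k\<^sup>2(W W') = \<sigma>\<^sub>k\<^sup>2(W) + excess\<^sub>k\<close> with \<open>excess\<^sub>k \<ge> 0\<close>, and all excesses vanish
  iff no row of \<open>W'\<close> has two positive entries, i.e. iff \<open>W'\<close> is a permutation matrix.\<close>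

section \<open>Expectations over i.i.d. sequences\<close>

definition seq_expect :: "real^'k::finite \<Rightarrow> nat \<Rightarrow> ('k list \<Rightarrow> real) \<Rightarrow> real" where
  "seq_expect q n F = (\<Sum>ys\<in>{ys. set ys \<subseteq> UNIV \<and> length ys = n}. seq_prob q ys * F ys)"

lemma expected_loss_eq_seq_expect:
  "expected_loss Proj p V n g = seq_expect (p v* V) n (\<lambda>ys. g (p_hat Proj V ys))"
  by (simp add: expected_loss_def seq_expect_def)

lemma seq_expect_0 [simp]: "seq_expect q 0 F = F []"
  by (simp add: seq_expect_def seq_prob_def)

lemma seq_expect_Suc:
  "seq_expect (q::real^'k::finite) (Suc n) F = (\<Sum>y\<in>UNIV. q$y * seq_expect q n (\<lambda>ys. F (y # ys)))"
proof -
  let ?L = "\<lambda>n. {ys::'k list. set ys \<subseteq> UNIV \<and> length ys = n}"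
  have lists: "?L (Suc n) = (\<lambda>(y, ys). y # ys) ` (UNIV \<times> ?L n)"
    by (auto simp: image_iff length_Suc_conv)
  have inj: "inj_on (\<lambda>(y, ys). y # ys) (UNIV \<times> ?L n)"
    by (auto simp: inj_on_def)
  have "seq_expect q (Suc n) F = (\<Sum>(y, ys)\<in>UNIV \<times> ?L n. seq_prob q (y # ys) * F (y # ys))"
    unfolding seq_expect_def lists by (subst sum.reindex[OF inj]) (simp add: case_prod_beta)
  also have "\<dots> = (\<Sum>y\<in>UNIV. \<Sum>ys\<in>?L n. seq_prob q (y # ys) * F (y # ys))"
    by (rule sum.cartesian_product[symmetric])
  also have "\<dots> = (\<Sum>y\<in>UNIV. q$y * seq_expect q n (\<lambda>ys. F (y # ys)))"
    by (simp add: seq_expect_def seq_prob_def sum_distrib_left mult.assoc)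
  finally show ?thesis .
qed

lemma seq_expect_add: "seq_expect q n (\<lambda>ys. F ys + G ys) = seq_expect q n F + seq_expect q n G"
  by (simp add: seq_expect_def distrib_left sum.distrib)

lemma seq_expect_diff: "seq_expect q n (\<lambda>ys. F ys - G ys) = seq_expect q n F - seq_expect q n G"
  by (simp add: seq_expect_def right_diff_distrib sum_subtractf)

lemma seq_expect_cmult: "seq_expect q n (\<lambda>ys. c * F ys) = c * seq_expect q n F"
  by (simp add: seq_expect_def sum_distrib_left mult.left_commute)

lemma seq_expect_multc: "seq_expect q n (\<lambda>ys. F ys * c) = seq_expect q n F * c"
  by (simp add: seq_expect_def sum_distrib_right mult.assoc)

lemma seq_expect_divide: "seq_expect q n (\<lambda>ys. F ys / c) = seq_expect q n F / c"
  by (simp add: seq_expect_def sum_divide_distrib)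

lemma seq_expect_sum:
  "finite A \<Longrightarrow> seq_expect q n (\<lambda>ys. \<Sum>k\<in>A. F k ys) = (\<Sum>k\<in>A. seq_expect q n (F k))"
  by (induction A rule: finite_induct) (auto simp: seq_expect_add seq_expect_def)

lemma seq_prob_nonneg: "(\<And>y. 0 \<le> (q::real^'k::finite)$y) \<Longrightarrow> 0 \<le> seq_prob q ys"
  by (induction ys) (auto simp: seq_prob_def)

lemma seq_expect_mono:
  "(\<And>y. 0 \<le> q$y) \<Longrightarrow> (\<And>ys. length ys = n \<Longrightarrow> F ys \<le> G ys) \<Longrightarrow> seq_expect q n F \<le> seq_expect q n G"
  unfolding seq_expect_def by (intro sum_mono mult_left_mono) (auto simp: seq_prob_nonneg)

lemma seq_expect_const:
  "(\<Sum>y\<in>UNIV. q$y) = 1 \<Longrightarrow> seq_expect (q::real^'k::finite) n (\<lambda>_. c) = c"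
  by (induction n) (auto simp: seq_expect_Suc sum_distrib_right[symmetric])

lemma seq_expect_abs_le:
  "(\<And>y. 0 \<le> q$y) \<Longrightarrow> \<bar>seq_expect q n F\<bar> \<le> seq_expect q n (\<lambda>ys. \<bar>F ys\<bar>)"
  unfolding seq_expect_def
  by (rule order_trans[OF sum_abs]) (auto simp: abs_mult seq_prob_nonneg intro!: sum_mono)

locale centered_law =
  fixes q :: "real^'k::finite" and h :: "'k \<Rightarrow> real"
  assumes law_nonneg: "\<And>y. 0 \<le> q$y" and law_sum: "(\<Sum>y\<in>UNIV. q$y) = 1"
    and mean_zero: "(\<Sum>y\<in>UNIV. q$y * h y) = 0"
begin

definition sigma2 where "sigma2 = (\<Sum>y\<in>UNIV. q$y * (h y)^2)"
definition mu4 where "mu4 = (\<Sum>y\<in>UNIV. q$y * (h y)^4)"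

lemma sigma2_nonneg: "0 \<le> sigma2"
  unfolding sigma2_def using law_nonneg by (intro sum_nonneg) auto

lemma mu4_nonneg: "0 \<le> mu4"
  unfolding mu4_def using law_nonneg by (intro sum_nonneg) auto

lemma expect_sum: "seq_expect q n (\<lambda>ys. \<Sum>y\<leftarrow>ys. h y) = 0"
proof (induction n)
  case (Suc n)
  then show ?case
    by (simp add: seq_expect_Suc seq_expect_add seq_expect_const law_sum distrib_left sum.distrib
        mean_zero flip: sum_distrib_right)
qed simp

lemma expect_sum_sq: "seq_expect q n (\<lambda>ys. (\<Sum>y\<leftarrow>ys. h y)^2) = n * sigma2"
proof (induction n)
  case (Suc n)
  have "seq_expect q (Suc n) (\<lambda>ys. (\<Sum>y\<leftarrow>ys. h y)^2) =
     (\<Sum>y\<in>UNIV. q$y * seq_expect q n (\<lambda>ys. (h y)^2 + 2 * h y * (\<Sum>y\<leftarrow>ys. h y) + (\<Sum>y\<leftarrow>ys. h y)^2))"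
    by (simp add: seq_expect_Suc power2_sum ac_simps)
  also have "\<dots> = (\<Sum>y\<in>UNIV. q$y * (h y)^2 + q$y * (n * sigma2))"
by (simp add: seq_expect_add seq_expect_cmult seq_expect_const law_sum expect_sum Suc
      distrib_left)
  also have "\<dots> = Suc n * sigma2"
by (simp add: sum.distrib law_sum sigma2_def[symmetric] flip: sum_distrib_left
      sum_distrib_right)
       (simp add: algebra_simps)
  finally show ?case .
qed simp

lemma expect_sum_pow4:
  "seq_expect q n (\<lambda>ys. (\<Sum>y\<leftarrow>ys. h y)^4) = real n * mu4 + 3 * real n * (real n - 1) * sigma2^2"
proof (induction n)
  case (Suc n)
  let ?S = "\<lambda>ys. \<Sum>y\<leftarrow>ys. h y"
  have binomial4: "(a + b)^4 = a^4 + 4*a^3*b + 6*a^2*b^2 + 4*a*b^3 + b^4" for a b :: real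
    by algebra
  have "seq_expect q (Suc n) (\<lambda>ys. (?S ys)^4) =
     (\<Sum>y\<in>UNIV. q$y * seq_expect q n (\<lambda>ys. (h y)^4 + 4*(h y)^3 * ?S ys + 6*(h y)^2 * (?S ys)^2
        + 4 * h y * (?S ys)^3 + (?S ys)^4))"
    by (simp add: seq_expect_Suc binomial4)
  also have "\<dots> = (\<Sum>y\<in>UNIV. q$y * (h y)^4 + (q$y * (h y)^2) * (6 * (n * sigma2))
      + (q$y * h y) * (4 * seq_expect q n (\<lambda>ys. (?S ys)^3))
      + q$y * (real n * mu4 + 3 * real n * (real n - 1) * sigma2^2))"
by (simp add: seq_expect_add seq_expect_cmult seq_expect_multc seq_expect_const law_sum
      expect_sum
        expect_sum_sq Suc algebra_simps)
  also have "\<dots> = mu4 + sigma2 * (6 * (n * sigma2)) + 0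
      + (real n * mu4 + 3 * real n * (real n - 1) * sigma2^2)"
using mu4_def sigma2_def by (simp add: sum.distrib sum_distrib_right[symmetric] law_sum
      mean_zero)
  also have "\<dots> = real (Suc n) * mu4 + 3 * real (Suc n) * (real (Suc n) - 1) * sigma2^2"
    by (cases n) (simp_all add: algebra_simps power2_eq_square)
  finally show ?case .
qed simp

lemma expect_sum_pow4_le:
  "seq_expect q n (\<lambda>ys. (\<Sum>y\<leftarrow>ys. h y)^4) \<le> (mu4 + 3 * sigma2^2) * (real n)^2"
proof -
  have "real n * mu4 \<le> (real n)^2 * mu4"
    using mu4_nonneg by (intro mult_right_mono) (cases n, auto simp: power2_eq_square)
  moreover have "3 * real n * (real n - 1) * sigma2^2 \<le> 3 * (real n)^2 * sigma2^2"
    by (intro mult_right_mono) (auto simp: power2_eq_square algebra_simps)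
  ultimately show ?thesis
    unfolding expect_sum_pow4 by (simp add: algebra_simps)
qed

end

section \<open>Mean absolute value of a sum of centred i.i.d. variables\<close>

lemma tendsto_by_uniform_approx:
  fixes a :: "nat \<Rightarrow> real" and b :: "real \<Rightarrow> nat \<Rightarrow> real" and c :: real and d :: "real \<Rightarrow> real"
  assumes approx_tendsto: "\<And>B. B > 0 \<Longrightarrow> b B \<longlonglongrightarrow> d B"
    and approx_seq: "\<And>B n. B > 0 \<Longrightarrow> \<bar>a n - b B n\<bar> \<le> 1 / B"
    and approx_limit: "\<And>B. B > 0 \<Longrightarrow> \<bar>c - d B\<bar> \<le> 1 / B"
  shows "a \<longlonglongrightarrow> c"
proof (rule LIMSEQ_I)
  fix r :: real assume r: "r > 0"
  define B where "B = 4 / r"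
  have B: "B > 0" "1 / B = r / 4" using r by (auto simp: B_def)
  obtain n0 where n0: "\<forall>n\<ge>n0. norm (b B n - d B) < r / 2"
    using LIMSEQ_D[OF approx_tendsto[OF B(1)]] r by (metis half_gt_zero)
  have "norm (a n - c) < r" if "n \<ge> n0" for n
    using n0[rule_format, OF that] approx_seq[OF B(1), of n] approx_limit[OF B(1)] B(2)
    by (simp only: real_norm_def)
  then show "\<exists>n0. \<forall>n\<ge>n0. norm (a n - c) < r" by blast
qed

lemma abs_minus_min_le: "B > 0 \<Longrightarrow> \<bar>x\<bar> - min (\<bar>x\<bar>) B \<le> x^2 / B" for x B :: real
proof (cases "\<bar>x\<bar> \<le> B")
  case False
  assume "B > 0"
  then have "\<bar>x\<bar> * B \<le> \<bar>x\<bar> * \<bar>x\<bar>" using False by (intro mult_left_mono) auto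
  then have "\<bar>x\<bar> \<le> x^2 / B" using \<open>B > 0\<close> by (simp add: field_simps power2_eq_square)
  then show ?thesis using \<open>B > 0\<close> by linarith
qed simp

lemma std_normal_abs_minus_min_le:
  assumes "B > 0"
  shows "\<bar>sqrt (2 / pi) - (\<integral>x. min \<bar>x\<bar> B \<partial>std_normal_distribution)\<bar> \<le> 1 / B"
proof -
  let ?N = std_normal_distribution
  interpret N: real_distribution ?N by (rule real_dist_normal_dist)
  have integrable: "integrable ?N (\<lambda>x. \<bar>x\<bar>)" "integrable ?N (\<lambda>x. x^2)"
    "integrable ?N (\<lambda>x. min \<bar>x\<bar> B)"
using integrable_std_normal_distribution_moment[of 1]
      integrable_std_normal_distribution_moment[of 2]
      assms by (auto intro: integrable_abs N.integrable_const_bound[where B = B])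
  have "sqrt (2 / pi) - (\<integral>x. min \<bar>x\<bar> B \<partial>?N) = (\<integral>x. \<bar>x\<bar> - min (\<bar>x\<bar>) B \<partial>?N)"
    using integrable std_normal_distribution_odd_moments_abs[of 0]
    by (simp add: Bochner_Integration.integral_diff)
  moreover have "(\<integral>x. \<bar>x\<bar> - min (\<bar>x\<bar>) B \<partial>?N) \<le> (\<integral>x. x^2 / B \<partial>?N)"
    using assms integrable abs_minus_min_le by (intro integral_mono) auto
  moreover have "0 \<le> (\<integral>x. \<bar>x\<bar> - min (\<bar>x\<bar>) B \<partial>?N)"
    by (intro integral_nonneg_AE) auto
  ultimately show ?thesis
    using std_normal_distribution_even_moments[of 1] by simp
qed

context centered_law
begin

definition law_pmf :: "'k pmf" where "law_pmf = embed_pmf (\<lambda>y. q$y)"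

lemma pmf_law_pmf: "pmf law_pmf y = q$y"
proof -
  have "(\<integral>\<^sup>+x. ennreal (q$x) \<partial>count_space UNIV) = 1"
    using law_nonneg law_sum by (subst nn_integral_count_space_finite) (auto simp: sum_ennreal)
  then show ?thesis unfolding law_pmf_def using law_nonneg by (subst pmf_embed_pmf) auto
qed

abbreviation iid :: "(nat \<Rightarrow> 'k) measure" where
  "iid \<equiv> PiM UNIV (\<lambda>_. measure_pmf law_pmf)"

lemma integral_iid_eq_seq_expect:
  fixes g :: "real \<Rightarrow> real"
  assumes "\<And>x. \<bar>g x\<bar> \<le> B" "g \<in> borel_measurable borel"
  shows "(\<integral>\<omega>. g (\<Sum>i<n. h (\<omega> i)) \<partial>iid) = seq_expect q n (\<lambda>ys. g (\<Sum>y\<leftarrow>ys. h y))"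
  using assms
proof (induction n arbitrary: g)
  case 0
  interpret S: sequence_space "measure_pmf law_pmf" ..
  show ?case by (simp add: S.P.prob_space)
next
  case (Suc n)
  interpret S: sequence_space "measure_pmf law_pmf" ..
  interpret P: pair_sigma_finite "measure_pmf law_pmf" iid ..
  interpret PP: prob_space "measure_pmf law_pmf \<Otimes>\<^sub>M iid"
    by (intro prob_space_pair) (auto simp: S.P.prob_space_axioms prob_space_measure_pmf)
  note [measurable] = Suc.prems(2)
  have "(\<integral>\<omega>. g (\<Sum>i<Suc n. h (\<omega> i)) \<partial>iid) =
      (\<integral>z. g (\<Sum>i<Suc n. h (case_nat (fst z) (snd z) i)) \<partial>(measure_pmf law_pmf \<Otimes>\<^sub>M iid))"
    by (subst S.PiM_iter[symmetric]) (auto simp: integral_distr split_beta')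
  also have "\<dots> = (\<integral>z. g (h (fst z) + (\<Sum>i<n. h (snd z i))) \<partial>(measure_pmf law_pmf \<Otimes>\<^sub>M iid))"
    by (simp only: sum.lessThan_Suc_shift nat.case)
  also have "\<dots> = (\<integral>y. (\<integral>\<omega>. g (h y + (\<Sum>i<n. h (\<omega> i))) \<partial>iid) \<partial>measure_pmf law_pmf)"
  proof (subst P.integral_fst'[symmetric])
    show "integrable (measure_pmf law_pmf \<Otimes>\<^sub>M iid) (\<lambda>z. g (h (fst z) + (\<Sum>i<n. h (snd z i))))"
      using Suc.prems(1) by (intro PP.integrable_const_bound[where B=B]) auto
  qed (simp add: split_beta')
  also have "\<dots> = (\<Sum>y\<in>UNIV. (\<integral>\<omega>. g (h y + (\<Sum>i<n. h (\<omega> i))) \<partial>iid) * pmf law_pmf y)"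
    by (rule integral_measure_pmf_real) auto
  also have "\<dots> = (\<Sum>y\<in>UNIV. q$y * seq_expect q n (\<lambda>ys. g (h y + (\<Sum>y\<leftarrow>ys. h y))))"
    using Suc.prems
    by (intro sum.cong refl) (simp add: Suc.IH[of "\<lambda>x. g (h y + x)" for y] pmf_law_pmf)
  also have "\<dots> = seq_expect q (Suc n) (\<lambda>ys. g (\<Sum>y\<leftarrow>ys. h y))"
    by (simp add: seq_expect_Suc)
  finally show ?case .
qed

lemma
  fixes F :: "'k \<Rightarrow> real"
  shows integrable_iid_coord: "integrable iid (\<lambda>\<omega>. F (\<omega> i))"
    and integral_iid_coord: "(\<integral>\<omega>. F (\<omega> i) \<partial>iid) = (\<Sum>y\<in>UNIV. q$y * F y)"
proof -
  interpret S: sequence_space "measure_pmf law_pmf" ..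
  have coord: "distr iid (measure_pmf law_pmf) (\<lambda>\<omega>. \<omega> i) = measure_pmf law_pmf"
    by (simp add: S.PiM_component)
  have "integrable (distr iid (measure_pmf law_pmf) (\<lambda>\<omega>. \<omega> i)) F"
    unfolding coord by (rule integrable_measure_pmf_finite) simp
  then show "integrable iid (\<lambda>\<omega>. F (\<omega> i))"
    by (subst (asm) integrable_distr_eq) auto
  have "(\<integral>\<omega>. F (\<omega> i) \<partial>iid) = (\<integral>y. F y \<partial>distr iid (measure_pmf law_pmf) (\<lambda>\<omega>. \<omega> i))"
    by (subst integral_distr) auto
  also have "\<dots> = (\<Sum>y\<in>UNIV. q$y * F y)"
unfolding coord by (subst integral_measure_pmf_real[of UNIV]) (auto simp: pmf_law_pmf
      mult.commute)
  finally show "(\<integral>\<omega>. F (\<omega> i) \<partial>iid) = (\<Sum>y\<in>UNIV. q$y * F y)" .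
qed

lemma iid_sum_weak_conv_std_normal:
  assumes "sigma2 > 0"
  shows "weak_conv_m (\<lambda>n. distr iid borel (\<lambda>\<omega>. (\<Sum>i<n. h (\<omega> i)) / sqrt (n * sigma2)))
           std_normal_distribution"
proof -
  interpret S: sequence_space "measure_pmf law_pmf" ..
  have "S.P.indep_vars (\<lambda>_. measure_pmf law_pmf) (\<lambda>i \<omega>. \<omega> i) UNIV"
    by (subst S.P.indep_vars_iff_distr_eq_PiM) (auto simp: S.PiM_component restrict_UNIV distr_id2)
  then have indep: "S.P.indep_vars (\<lambda>_. borel) (\<lambda>i \<omega>. h (\<omega> i)) UNIV"
    by (rule S.P.indep_vars_compose2) auto
  have identical: "distr iid borel (\<lambda>\<omega>. h (\<omega> i)) = distr (measure_pmf law_pmf) borel h" for i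
  proof -
    have "distr iid borel (\<lambda>\<omega>. h (\<omega> i)) = distr (distr iid (measure_pmf law_pmf) (\<lambda>\<omega>. \<omega> i)) borel h"
      by (subst distr_distr) (auto simp: comp_def)
    then show ?thesis by (simp add: S.PiM_component)
  qed
  have "weak_conv_m (\<lambda>n. distr iid borel (\<lambda>\<omega>. (\<Sum>i<n. h (\<omega> i)) / sqrt (n * (sqrt sigma2)\<^sup>2)))
          std_normal_distribution"
  proof (rule S.P.central_limit_theorem_zero_mean[OF indep])
    show "S.P.expectation (\<lambda>\<omega>. h (\<omega> n)) = 0" for n
      using integral_iid_coord[of h n] mean_zero by simp
    show "integrable iid (\<lambda>\<omega>. (h (\<omega> n))\<^sup>2)" for n
      by (rule integrable_iid_coord)
    show "S.P.variance (\<lambda>\<omega>. h (\<omega> n)) = (sqrt sigma2)\<^sup>2" for n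
      using integral_iid_coord[of h n] integral_iid_coord[of "\<lambda>y. (h y)^2" n] mean_zero assms
      by (simp add: sigma2_def)
    show "distr iid borel (\<lambda>\<omega>. h (\<omega> n)) = distr iid borel (\<lambda>\<omega>. h (\<omega> 0))" for n
      by (simp only: identical)
  qed (use assms in simp)
  then show ?thesis using assms by simp
qed

lemma expect_bounded_continuous_tendsto:
  assumes "sigma2 > 0" and bounded: "\<And>x. \<bar>g x\<bar> \<le> B" and continuous: "\<And>x. isCont g x"
  shows "(\<lambda>n. seq_expect q n (\<lambda>ys. g ((\<Sum>y\<leftarrow>ys. h y) / sqrt (n * sigma2))))
           \<longlonglongrightarrow> (\<integral>x. g x \<partial>std_normal_distribution)"
proof -
  interpret S: sequence_space "measure_pmf law_pmf" ..
  have [measurable]: "g \<in> borel_measurable borel"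
    using continuous by (intro borel_measurable_continuous_onI continuous_at_imp_continuous_on) auto
  have "seq_expect q n (\<lambda>ys. g ((\<Sum>y\<leftarrow>ys. h y) / sqrt (n * sigma2))) =
      (\<integral>x. g x \<partial>distr iid borel (\<lambda>\<omega>. (\<Sum>i<n. h (\<omega> i)) / sqrt (n * sigma2)))" for n
    using bounded
    by (simp add: integral_distr integral_iid_eq_seq_expect[of "\<lambda>x. g (x / sqrt (n * sigma2))" B])
  moreover have "(\<lambda>n. \<integral>x. g x \<partial>distr iid borel (\<lambda>\<omega>. (\<Sum>i<n. h (\<omega> i)) / sqrt (n * sigma2)))
      \<longlonglongrightarrow> (\<integral>x. g x \<partial>std_normal_distribution)"
    using bounded continuous
    by (intro weak_conv_imp_integral_bdd_continuous_conv[OF _ real_dist_normal_dist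
          iid_sum_weak_conv_std_normal[OF assms(1)]]) (auto intro: S.P.real_distribution_distr)
  ultimately show ?thesis by simp
qed

lemma expect_fun_sum_degenerate:
  assumes "sigma2 = 0"
  shows "seq_expect q n (\<lambda>ys. g (\<Sum>y\<leftarrow>ys. h y)) = g 0"
proof -
  have "\<forall>y. q$y * (h y)^2 = 0"
    using assms law_nonneg unfolding sigma2_def by (subst (asm) sum_nonneg_eq_0_iff) auto
  then have degenerate: "h y = 0" if "q$y > 0" for y
    using that by (metis less_irrefl mult_eq_0_iff power_eq_0_iff)
  show ?thesis
  proof (induction n arbitrary: g)
    case (Suc n)
    have step: "q$y * seq_expect q n (\<lambda>ys. g (h y + (\<Sum>y\<leftarrow>ys. h y))) = q$y * g 0" for y
      using Suc.IH[of "\<lambda>x. g (h y + x)"] law_nonneg[of y] degenerate[of y] by (cases "q$y > 0") auto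
    have "seq_expect q (Suc n) (\<lambda>ys. g (\<Sum>y\<leftarrow>ys. h y)) = (\<Sum>y\<in>UNIV. q$y * g 0)"
      by (simp add: seq_expect_Suc step)
    then show ?case by (simp add: law_sum flip: sum_distrib_right)
  qed simp
qed

lemma expect_abs_minus_min_le:
  fixes n :: nat
  assumes "sigma2 > 0" "B > 0"
  defines "Z \<equiv> \<lambda>ys. (\<Sum>y\<leftarrow>ys. h y) / sqrt (n * sigma2)"
  shows "\<bar>seq_expect q n (\<lambda>ys. \<bar>Z ys\<bar>) - seq_expect q n (\<lambda>ys. min \<bar>Z ys\<bar> B)\<bar> \<le> 1 / B"
proof (cases "n = 0")
  case False
  have "seq_expect q n (\<lambda>ys. \<bar>Z ys\<bar> - min (\<bar>Z ys\<bar>) B) \<le> seq_expect q n (\<lambda>ys. (Z ys)^2 / B)"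
    by (intro seq_expect_mono law_nonneg abs_minus_min_le assms(2))
  also have "\<dots> = 1 / B"
    using False assms(1) by (simp add: Z_def power_divide seq_expect_divide expect_sum_sq)
  finally show ?thesis
    using seq_expect_mono[OF law_nonneg, of n "\<lambda>_. 0" "\<lambda>ys. \<bar>Z ys\<bar> - min (\<bar>Z ys\<bar>) B"]
    by (simp add: seq_expect_diff seq_expect_const law_sum)
qed (use assms in \<open>simp add: Z_def\<close>)

text \<open>Weak convergence only controls bounded test functions, so \<open>\<bar>x\<bar>\<close> is truncated at \<open>B\<close>;
  the second moments bound the truncation error by \<open>1 / B\<close> uniformly in \<open>n\<close>.\<close>

lemma expect_abs_sum_tendsto:
  "(\<lambda>n. seq_expect q n (\<lambda>ys. \<bar>\<Sum>y\<leftarrow>ys. h y\<bar>) / sqrt n) \<longlonglongrightarrow> sqrt (2 / pi) * sqrt sigma2"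
proof (cases "sigma2 = 0")
  case True
  then show ?thesis using expect_fun_sum_degenerate by simp
next
  case False
  then have pos: "sigma2 > 0" using sigma2_nonneg by simp
  let ?Z = "\<lambda>n ys. (\<Sum>y\<leftarrow>ys. h y) / sqrt (n * sigma2)"
  have "(\<lambda>n. seq_expect q n (\<lambda>ys. \<bar>?Z n ys\<bar>)) \<longlonglongrightarrow> sqrt (2 / pi)"
  proof (rule tendsto_by_uniform_approx)
    fix B :: real assume B: "B > 0"
    show "(\<lambda>n. seq_expect q n (\<lambda>ys. min \<bar>?Z n ys\<bar> B)) \<longlonglongrightarrow> (\<integral>x. min \<bar>x\<bar> B \<partial>std_normal_distribution)"
using B by (intro expect_bounded_continuous_tendsto[OF pos, of _ B]) (auto intro!:
        continuous_intros)
    show "\<bar>sqrt (2 / pi) - (\<integral>x. min \<bar>x\<bar> B \<partial>std_normal_distribution)\<bar> \<le> 1 / B"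
      by (rule std_normal_abs_minus_min_le[OF B])
    show "\<bar>seq_expect q n (\<lambda>ys. \<bar>?Z n ys\<bar>) - seq_expect q n (\<lambda>ys. min \<bar>?Z n ys\<bar> B)\<bar> \<le> 1 / B" for n
      by (rule expect_abs_minus_min_le[OF pos B])
  qed
  moreover have "seq_expect q n (\<lambda>ys. \<bar>\<Sum>y\<leftarrow>ys. h y\<bar>) / sqrt n =
      seq_expect q n (\<lambda>ys. \<bar>?Z n ys\<bar>) * sqrt sigma2" for n
    using pos by (simp add: seq_expect_divide abs_div real_sqrt_mult field_simps)
  ultimately show ?thesis by (simp add: tendsto_mult_right)
qed

end

lemma
  fixes A :: "real^'n^'n"
  assumes "invertible A"
  shows matrix_inv_right: "A ** matrix_inv A = mat 1"
    and matrix_inv_left: "matrix_inv A ** A = mat 1"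
proof -
  have "A ** matrix_inv A = mat 1 \<and> matrix_inv A ** A = mat 1"
    using assms unfolding invertible_def matrix_inv_def by (rule someI_ex)
  then show "A ** matrix_inv A = mat 1" "matrix_inv A ** A = mat 1" by auto
qed

lemma matrix_inv_unique:
  fixes A C :: "real^'n^'n"
  assumes "invertible A" "C ** A = mat 1"
  shows "matrix_inv A = C"
proof -
  have "matrix_inv A = (C ** A) ** matrix_inv A" using assms by simp
  also have "\<dots> = C" by (simp add: matrix_mul_assoc[symmetric] matrix_inv_right[OF assms(1)])
  finally show ?thesis .
qed

lemma matrix_inv_mult:
  fixes A B :: "real^'n^'n"
  assumes "invertible A" "invertible B"
  shows "matrix_inv (A ** B) = matrix_inv B ** matrix_inv A"
proof (rule matrix_inv_unique)
  show "invertible (A ** B)" using assms by (rule invertible_mult)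
  have "matrix_inv B ** matrix_inv A ** (A ** B) = matrix_inv B ** (matrix_inv A ** A) ** B"
    by (simp add: matrix_mul_assoc)
  then show "matrix_inv B ** matrix_inv A ** (A ** B) = mat 1"
    by (simp add: matrix_inv_left assms)
qed

lemma invertible_matrix_inv: "invertible A \<Longrightarrow> invertible (matrix_inv (A :: real^'n^'n))"
  using matrix_inv_left matrix_inv_right unfolding invertible_def by blast

lemma invertible_mat_1: "invertible (mat 1 :: real^'n^'n)"
  unfolding invertible_def by (intro exI[of _ "mat 1"]) simp

lemma matrix_inv_mat_1: "matrix_inv (mat 1 :: real^'n^'n) = mat 1"
  by (rule matrix_inv_unique[OF invertible_mat_1]) simp

lemma invertible_imp_inj_rows:
  fixes A :: "real^'n::finite^'n"
  assumes "invertible A"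
  shows "inj (\<lambda>l. A $ l)"
proof (rule injI)
  fix l l' assume "A $ l = A $ l'"
  then have "(A ** matrix_inv A) $ l = (A ** matrix_inv A) $ l'"
    by (simp add: matrix_matrix_mult_def vec_eq_iff)
  then have "(mat 1 :: real^'n^'n) $ l $ l = (mat 1 :: real^'n^'n) $ l' $ l"
    by (simp add: matrix_inv_right[OF assms])
  then show "l = l'" by (simp add: mat_def split: if_splits)
qed

lemma row_stochastic_mult:
  fixes A B :: "real^'k::finite^'k"
  assumes "row_stochastic A" "row_stochastic B"
  shows "row_stochastic (A ** B)"
  unfolding row_stochastic_def
proof (intro conjI allI)
  show "0 \<le> (A ** B)$k$l" for k l
    using assms unfolding row_stochastic_def matrix_matrix_mult_def by (simp add: sum_nonneg)
  have "(\<Sum>l\<in>UNIV. (A ** B)$k$l) = (\<Sum>j\<in>UNIV. A$k$j * (\<Sum>l\<in>UNIV. B$j$l))" for k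
    by (simp add: matrix_matrix_mult_def sum_distrib_left) (rule sum.swap)
  then show "(\<Sum>l\<in>UNIV. (A ** B)$k$l) = 1" for k
    using assms unfolding row_stochastic_def by simp
qed

lemma row_stochastic_mat_1: "row_stochastic (mat 1 :: real^'k::finite^'k)"
  unfolding row_stochastic_def by (simp add: mat_def sum.delta)

lemma row_stochastic_matrix_inv_row_sum:
  fixes V :: "real^'k::finite^'k"
  assumes "row_stochastic V" "invertible V"
  shows "(\<Sum>l\<in>UNIV. matrix_inv V $ k $ l) = 1"
proof -
  have ones: "V *v vec 1 = vec 1"
    using assms(1) by (simp add: row_stochastic_def matrix_vector_mult_def vec_eq_iff)
  have "matrix_inv V *v vec 1 = matrix_inv V *v (V *v vec 1)" using ones by simp
  also have "\<dots> = vec 1" by (simp add: matrix_vector_mul_assoc matrix_inv_left[OF assms(2)])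
  finally show ?thesis by (simp add: matrix_vector_mult_def vec_eq_iff)
qed

lemma row_stochastic_permutation_matrix:
  fixes V :: "real^'k::finite^'k"
  assumes "row_stochastic V" "invertible V"
    and single: "\<And>j l l'. V$j$l > 0 \<Longrightarrow> V$j$l' > 0 \<Longrightarrow> l = l'"
  shows "permutation_matrix V"
proof -
  have nonneg: "0 \<le> V$j$l" and row_sum: "(\<Sum>l\<in>UNIV. V$j$l) = 1" for j l
    using assms(1) by (auto simp: row_stochastic_def)
  have "\<exists>l. V$j$l > 0" for j
    using row_sum[of j] nonneg by (metis order_le_less sum.neutral zero_neq_one)
  then obtain \<sigma> where \<sigma>: "V$j$(\<sigma> j) > 0" for j by metis
  have off: "V$j$l = 0" if "l \<noteq> \<sigma> j" for j l
    using single[OF \<sigma>] nonneg that by (metis order_le_less)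
  have "V$j$(\<sigma> j) = (\<Sum>l\<in>UNIV. V$j$l)" for j
    using off by (simp add: sum.remove[of UNIV "\<sigma> j"])
  then have V: "V = (\<chi> i j. if \<sigma> i = j then 1 else 0)"
    using off row_sum by (auto simp: vec_eq_iff)
  have "inj \<sigma>"
  proof (rule injI)
    fix j j' assume "\<sigma> j = \<sigma> j'"
    then have "V $ j = V $ j'" by (simp add: V vec_eq_iff)
    then show "j = j'" using invertible_imp_inj_rows[OF assms(2)] by (auto dest: injD)
  qed
  then have "\<sigma> permutes UNIV"
    by (intro bij_imp_permutes) (auto simp: bij_def finite_UNIV_inj_surj)
  then show ?thesis unfolding permutation_matrix_def using V by blast
qed

lemma prob_vec_le_1:
  assumes "prob_vec v" shows "v$k \<le> (1::real)"
proof -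
  have "v$k \<le> (\<Sum>l\<in>UNIV. v$l)" using assms unfolding prob_vec_def by (intro member_le_sum) auto
  then show ?thesis using assms unfolding prob_vec_def by simp
qed

lemma prob_vec_lt_1:
  fixes p :: "real^'k::finite"
  assumes "CARD('k) \<ge> 2" "prob_vec p" "\<forall>k. p$k > 0"
  shows "p$k < 1"
proof -
  have "\<not> UNIV \<subseteq> {k}"
  proof
    assume "UNIV \<subseteq> {k}"
    then have "CARD('k) \<le> card {k}" by (intro card_mono) auto
    then show False using assms(1) by simp
  qed
  then obtain j where "j \<noteq> k" by blast
  then have "p$k + p$j \<le> (\<Sum>l\<in>UNIV. p$l)"
    using sum_mono2[of UNIV "{k, j}" "\<lambda>l. p$l"] assms(3) by (simp add: less_imp_le)
  moreover have "(\<Sum>l\<in>UNIV. p$l) = 1" "0 < p$j"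
    using assms(2,3) by (auto simp: prob_vec_def)
  ultimately show ?thesis
    by linarith
qed

lemma vector_matrix_mult_pos:
  fixes V :: "real^'k::finite^'k"
  assumes "row_stochastic V" "invertible V" "\<forall>k. p$k > 0"
  shows "(p v* V)$l > 0"
proof (rule ccontr)
  assume "\<not> (p v* V)$l > 0"
  moreover have nonneg: "\<forall>k\<in>UNIV. 0 \<le> p$k * V$k$l"
    using assms(1,3) unfolding row_stochastic_def by (simp add: less_imp_le)
  ultimately have "(\<Sum>k\<in>UNIV. p$k * V$k$l) = 0"
    using sum_nonneg[of UNIV "\<lambda>k. p$k * V$k$l"] by (auto simp: vector_matrix_mult_def)
  then have "V$k$l = 0" for k
    using nonneg assms(3) by (simp add: sum_nonneg_eq_0_iff) (metis less_irrefl)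
  then have "V *v axis l 1 = 0"
    by (simp add: matrix_vector_mult_def vec_eq_iff axis_def if_distrib cong: if_cong)
  then have "axis l (1::real) = 0"
    by (metis matrix_vector_mul_assoc matrix_inv_left[OF assms(2)] matrix_vector_mul_lid
        matrix_vector_mult_0_right)
  then show False by (simp add: axis_eq_0_iff)
qed

lemma prob_vec_vector_matrix_mult_sum:
  fixes V :: "real^'k::finite^'k"
  assumes "row_stochastic V" "prob_vec p"
  shows "(\<Sum>l\<in>UNIV. (p v* V)$l) = 1"
proof -
  have "(\<Sum>l\<in>UNIV. (p v* V)$l) = (\<Sum>k\<in>UNIV. p$k * (\<Sum>l\<in>UNIV. V$k$l))"
    by (simp add: vector_matrix_mult_def sum_distrib_left) (rule sum.swap)
  then show ?thesis using assms by (simp add: row_stochastic_def prob_vec_def)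
qed

section \<open>Scores of the inverted channel\<close>

definition score :: "real^'k::finite \<Rightarrow> real^'k^'k \<Rightarrow> 'k \<Rightarrow> 'k \<Rightarrow> real" where
  "score p V k y = matrix_inv V $ y $ k - p$k"

definition score_var :: "real^'k::finite \<Rightarrow> real^'k^'k \<Rightarrow> 'k \<Rightarrow> real" where
  "score_var p V k = (\<Sum>y\<in>UNIV. (p v* V)$y * (score p V k y)^2)"

lemma centered_law_score:
  fixes V :: "real^'k::finite^'k"
  assumes "row_stochastic V" "invertible V" "prob_vec p" "\<forall>k. p$k > 0"
  shows "centered_law (p v* V) (score p V k)"
proof
  show "0 \<le> (p v* V)$y" for y
    using vector_matrix_mult_pos[OF assms(1,2,4)] by (simp add: less_imp_le)
  show "(\<Sum>y\<in>UNIV. (p v* V)$y) = 1" by (rule prob_vec_vector_matrix_mult_sum[OF assms(1,3)])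
  have "(p v* V) v* matrix_inv V = p"
    by (simp add: vector_matrix_mul_assoc matrix_inv_right[OF assms(2)])
  then have "(\<Sum>y\<in>UNIV. (p v* V)$y * matrix_inv V $ y $ k) = p$k"
    by (simp add: vector_matrix_mult_def vec_eq_iff)
  then show "(\<Sum>y\<in>UNIV. (p v* V)$y * score p V k y) = 0"
    using prob_vec_vector_matrix_mult_sum[OF assms(1,3)]
    by (simp add: score_def right_diff_distrib sum_subtractf flip: sum_distrib_right)
qed

lemma
  fixes V :: "real^'k::finite^'k"
  assumes "row_stochastic V" "invertible V" "prob_vec p" "\<forall>k. p$k > 0"
  shows sigma2_score: "centered_law.sigma2 (p v* V) (score p V k) = score_var p V k"
    and score_var_nonneg: "0 \<le> score_var p V k"
  using centered_law.sigma2_def[OF centered_law_score[OF assms]]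
    centered_law.sigma2_nonneg[OF centered_law_score[OF assms]]
  by (simp_all add: score_var_def)

lemma sum_count_eq_sum_list:
  "(\<Sum>l\<in>(UNIV::'k::finite set). real (length (filter (\<lambda>y. y = l) ys)) * c l) = (\<Sum>y\<leftarrow>ys. c y)"
proof (induction ys)
  case (Cons a ys)
  have "(\<Sum>l\<in>UNIV. real (length (filter (\<lambda>y. y = l) (a # ys))) * c l)
     = (\<Sum>l\<in>UNIV. (if l = a then c l else 0) + real (length (filter (\<lambda>y. y = l) ys)) * c l)"
    by (intro sum.cong) (auto simp: algebra_simps)
  also have "\<dots> = c a + (\<Sum>y\<leftarrow>ys. c y)" using Cons by (simp add: sum.distrib)
  finally show ?case by simp
qed simp

lemma emp_dist_matrix_inv:
  fixes V :: "real^'k::finite^'k"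
  assumes "length ys = n" "n > 0"
  shows "(emp_dist ys v* matrix_inv V)$k = p$k + (\<Sum>y\<leftarrow>ys. score p V k y) / n"
proof -
  have "(\<Sum>y\<leftarrow>ys. score p V k y) = (\<Sum>y\<leftarrow>ys. matrix_inv V $ y $ k) - n * p$k"
    using assms(1) by (induction ys arbitrary: n) (auto simp: score_def algebra_simps)
  moreover have "(emp_dist ys v* matrix_inv V)$k = (\<Sum>y\<leftarrow>ys. matrix_inv V $ y $ k) / n"
    using assms sum_count_eq_sum_list[of ys "\<lambda>l. matrix_inv V $ l $ k"]
    by (simp add: emp_dist_def vector_matrix_mult_def flip: sum_divide_distrib)
  ultimately show ?thesis using assms(2) by (simp add: field_simps)
qed

lemma emp_dist_matrix_inv_sum:
  fixes V :: "real^'k::finite^'k"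
  assumes "ys \<noteq> []" "row_stochastic V" "invertible V"
  shows "(\<Sum>k\<in>UNIV. (emp_dist ys v* matrix_inv V)$k) = 1"
proof -
  have "(\<Sum>k\<in>UNIV. (emp_dist ys v* matrix_inv V)$k) =
      (\<Sum>l\<in>UNIV. emp_dist ys $ l * (\<Sum>k\<in>UNIV. matrix_inv V $ l $ k))"
    by (simp add: vector_matrix_mult_def sum_distrib_left) (rule sum.swap)
  also have "\<dots> = (\<Sum>l\<in>UNIV. real (length (filter (\<lambda>y. y = l) ys)) * 1) / length ys"
    by (simp add: row_stochastic_matrix_inv_row_sum[OF assms(2,3)] emp_dist_def sum_divide_distrib)
  also have "\<dots> = 1"
    using assms(1) by (simp only: sum_count_eq_sum_list) (simp add: sum_list_triv)
  finally show ?thesis .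
qed

lemma sum_weighted_square_deviation:
  fixes w b :: "'l::finite \<Rightarrow> real"
  assumes "(\<Sum>l\<in>UNIV. w l) = 1" "(\<Sum>l\<in>UNIV. w l * b l) = a"
  shows "(\<Sum>l\<in>UNIV. w l * (b l - c)^2) = (\<Sum>l\<in>UNIV. w l * (b l - a)^2) + (a - c)^2"
proof -
  have "(\<Sum>l\<in>UNIV. w l * (b l - c)^2) = (\<Sum>l\<in>UNIV. w l * (b l - a)^2 + 2 * (a - c) * (w l * b l)
      - 2 * (a - c) * a * w l + (a - c)^2 * w l)"
    by (intro sum.cong refl) (simp add: power2_eq_square algebra_simps)
  then show ?thesis
    using assms by (simp add: sum.distrib sum_subtractf flip: sum_distrib_left)
qed

locale two_channels =
  fixes p :: "real^'k::finite" and W W' :: "real^'k^'k"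
  assumes p_prob: "prob_vec p" and p_pos: "\<forall>k. p$k > 0"
    and W_stochastic: "row_stochastic W" and W_invertible: "invertible W"
    and W'_stochastic: "row_stochastic W'" and W'_invertible: "invertible W'"
begin

definition excess_var :: "'k \<Rightarrow> real" where
  "excess_var k = (\<Sum>j\<in>UNIV. (p v* W)$j *
     (\<Sum>l\<in>UNIV. W'$j$l * (matrix_inv (W ** W') $ l $ k - matrix_inv W $ j $ k)^2))"

lemma W'_nonneg: "0 \<le> W'$j$l" and W'_row_sum: "(\<Sum>l\<in>UNIV. W'$j$l) = 1"
  using W'_stochastic by (auto simp: row_stochastic_def)

lemma W'_matrix_inv_mult: "(\<Sum>l\<in>UNIV. W'$j$l * matrix_inv (W ** W') $ l $ k) = matrix_inv W $ j $ k"
proof -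
  have "W' ** matrix_inv (W ** W') = matrix_inv W"
    by (simp add: matrix_inv_mult W_invertible W'_invertible matrix_mul_assoc
        flip: matrix_mul_assoc[of W'] add: matrix_inv_right)
  then show ?thesis by (simp add: matrix_matrix_mult_def vec_eq_iff)
qed

text \<open>Row \<open>j\<close> of \<open>W\<^sup>-\<^sup>1\<close> is the \<open>W'\<^sub>j\<close>-average of the rows of \<open>(W W')\<^sup>-\<^sup>1\<close>
  (\<open>W'_matrix_inv_mult\<close>), so the decomposition below is the law of total variance.\<close>

lemma score_var_mult: "score_var p (W ** W') k = score_var p W k + excess_var k"
proof -
  have "score_var p (W ** W') k =
      (\<Sum>l\<in>UNIV. ((p v* W) v* W')$l * (matrix_inv (W ** W') $ l $ k - p$k)^2)"
    by (simp add: score_var_def score_def vector_matrix_mul_assoc)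
  also have "\<dots> = (\<Sum>l\<in>UNIV. \<Sum>j\<in>UNIV. (p v* W)$j * (W'$j$l * (matrix_inv (W ** W') $ l $ k - p$k)^2))"
    unfolding vector_matrix_mult_def by (simp add: sum_distrib_right mult.assoc)
  also have "\<dots> =
      (\<Sum>j\<in>UNIV. (p v* W)$j * (\<Sum>l\<in>UNIV. W'$j$l * (matrix_inv (W ** W') $ l $ k - p$k)^2))"
    by (subst sum.swap) (simp add: sum_distrib_left)
  also have "\<dots> = (\<Sum>j\<in>UNIV. (p v* W)$j * (matrix_inv W $ j $ k - p$k)^2) + excess_var k"
    by (simp add: sum_weighted_square_deviation[OF W'_row_sum W'_matrix_inv_mult, where c = "p$k"]
        excess_var_def distrib_left sum.distrib)
  finally show ?thesis by (simp add: score_var_def score_def)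
qed

lemma excess_var_nonneg: "0 \<le> excess_var k"
unfolding excess_var_def using vector_matrix_mult_pos[OF W_stochastic W_invertible p_pos]
    W'_nonneg
  by (intro sum_nonneg mult_nonneg_nonneg) (auto simp: less_imp_le)

lemma excess_var_eq_0_iff:
  "excess_var k = 0 \<longleftrightarrow>
     (\<forall>j l. W'$j$l > 0 \<longrightarrow> matrix_inv (W ** W') $ l $ k = matrix_inv W $ j $ k)"
proof -
  have law_pos: "(p v* W)$j > 0" for j
    by (rule vector_matrix_mult_pos[OF W_stochastic W_invertible p_pos])
  have "(p v* W)$j \<noteq> 0" for j by (simp add: law_pos less_imp_neq[symmetric])
  moreover have "W'$j$l = 0 \<longleftrightarrow> \<not> W'$j$l > 0" for j l using W'_nonneg[of j l] by auto
  ultimately show ?thesis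
    unfolding excess_var_def using law_pos W'_nonneg
    by (simp add: sum_nonneg_eq_0_iff sum_nonneg less_imp_le)
qed

lemma excess_var_eq_0_iff_permutation_matrix: "(\<forall>k. excess_var k = 0) \<longleftrightarrow> permutation_matrix W'"
proof
  assume "\<forall>k. excess_var k = 0"
  then have rows: "matrix_inv (W ** W') $ l = matrix_inv W $ j" if "W'$j$l > 0" for j l
    using that by (simp add: excess_var_eq_0_iff vec_eq_iff)
  have "inj (\<lambda>l. matrix_inv (W ** W') $ l)"
by (intro invertible_imp_inj_rows invertible_matrix_inv invertible_mult W_invertible
      W'_invertible)
  then show "permutation_matrix W'"
    using rows by (intro row_stochastic_permutation_matrix W'_stochastic W'_invertible) (metis injD)
next
  assume "permutation_matrix W'"
  then obtain \<sigma> where W': "W' = (\<chi> i j. if \<sigma> i = j then 1 else 0)"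
    unfolding permutation_matrix_def by blast
  then have entry: "W'$j$l = (if \<sigma> j = l then 1 else 0)" for j l
    by simp
  have "W'$j$l * c = (if \<sigma> j = l then c else 0)" for j l c
    by (simp add: entry)
  then have "matrix_inv W $ j $ k = matrix_inv (W ** W') $ (\<sigma> j) $ k" for j k
    using W'_matrix_inv_mult[of j k] by simp
  then show "\<forall>k. excess_var k = 0"
    by (simp add: excess_var_eq_0_iff entry)
qed

end

section \<open>Local behaviour of the divergence function\<close>

lemma bigo_powr_imp_cubic_bound:
  fixes R :: "real \<Rightarrow> real"
  assumes "R \<in> O[at a](\<lambda>x. \<bar>x - a\<bar> powr e)" "3 \<le> e" "R a = 0"
  shows "\<exists>\<delta>>0. \<exists>C\<ge>0. \<forall>x. \<bar>x - a\<bar> \<le> \<delta> \<longrightarrow> \<bar>R x\<bar> \<le> C * \<bar>x - a\<bar>^3"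
proof -
  obtain c where c: "c > 0" "eventually (\<lambda>x. norm (R x) \<le> c * norm (\<bar>x - a\<bar> powr e)) (at a)"
    using landau_o.bigE[OF assms(1)] by blast
  then obtain d where d: "d > 0"
    and near: "\<And>x. x \<noteq> a \<Longrightarrow> dist x a < d \<Longrightarrow> \<bar>R x\<bar> \<le> c * \<bar>x - a\<bar> powr e"
    unfolding eventually_at by auto
  have "\<bar>R x\<bar> \<le> c * \<bar>x - a\<bar>^3" if "\<bar>x - a\<bar> \<le> min (d / 2) 1" for x
  proof (cases "x = a")
    case False
    have "\<bar>R x\<bar> \<le> c * \<bar>x - a\<bar> powr e"
      using near[OF False] that d by (simp add: dist_real_def)
    also have "\<bar>x - a\<bar> powr e \<le> \<bar>x - a\<bar> powr 3"
      using that assms(2) by (intro powr_mono') auto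
    also have "\<bar>x - a\<bar> powr 3 = \<bar>x - a\<bar>^3"
      using False by (simp add: powr_realpow)
    finally show ?thesis
      using c(1) by simp
  qed (simp add: assms(3))
  moreover have "min (d / 2) 1 > 0" using d by simp
  ultimately show ?thesis
    using c(1) less_imp_le by blast
qed

lemma admissible_f_quadratic_approx:
  assumes "admissible_f f"
  shows "\<exists>\<delta>>0. \<exists>C\<ge>0. \<exists>c1. \<forall>x. \<bar>x - 1\<bar> \<le> \<delta> \<longrightarrow>
           \<bar>f x - c1 * (x - 1) - (deriv ^^ 2) f 1 / 2 * (x - 1)^2\<bar> \<le> C * \<bar>x - 1\<bar>^3"
proof -
  define d where "d \<rho> = (deriv ^^ \<rho>) f 1" for \<rho>
  define R where "R x = f x - (\<Sum>\<rho>=1..4. (deriv ^^ \<rho>) f 1 / fact \<rho> * (x - 1) ^ \<rho>)" for x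
  obtain \<gamma> where "\<gamma> > 0" "R \<in> O[at 1](\<lambda>x. \<bar>x - 1\<bar> powr (4 + \<gamma>))" and "f 1 = 0"
    using assms unfolding admissible_f_def R_def[abs_def] by blast
  then obtain \<delta> C where \<delta>: "\<delta> > 0" and C: "C \<ge> 0"
    and R_bound: "\<And>x. \<bar>x - 1\<bar> \<le> \<delta> \<Longrightarrow> \<bar>R x\<bar> \<le> C * \<bar>x - 1\<bar>^3"
    using bigo_powr_imp_cubic_bound[of R 1 "4 + \<gamma>"] by (auto simp: R_def)
  have R_eq: "f x - d 1 * (x - 1) - (deriv ^^ 2) f 1 / 2 * (x - 1)^2
      = R x + d 3 / 6 * (x - 1)^3 + d 4 / 24 * (x - 1)^4"
    for x :: real
  proof -
    have "{1..4::nat} = {1, 2, 3, 4}" by auto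
    then show ?thesis by (simp add: R_def d_def fact_numeral algebra_simps)
  qed
  have "\<bar>f x - d 1 * (x - 1) - (deriv ^^ 2) f 1 / 2 * (x - 1)^2\<bar>
      \<le> (C + \<bar>d 3\<bar> / 6 + \<bar>d 4\<bar> / 24) * \<bar>x - 1\<bar>^3"
    if x: "\<bar>x - 1\<bar> \<le> min \<delta> 1" for x
  proof -
    have "\<bar>x - 1\<bar>^4 \<le> \<bar>x - 1\<bar>^3"
      using x by (intro power_decreasing) auto
    then have "\<bar>d 4 / 24 * (x - 1)^4\<bar> \<le> \<bar>d 4\<bar> / 24 * \<bar>x - 1\<bar>^3"
      by (simp add: abs_mult power_abs mult_left_mono)
    moreover have "\<bar>d 3 / 6 * (x - 1)^3\<bar> = \<bar>d 3\<bar> / 6 * \<bar>x - 1\<bar>^3"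
      by (simp add: abs_mult power_abs)
    moreover have "\<bar>R x\<bar> \<le> C * \<bar>x - 1\<bar>^3"
      using x by (intro R_bound) simp
    moreover have "\<bar>R x + d 3 / 6 * (x - 1)^3 + d 4 / 24 * (x - 1)^4\<bar> \<le>
        \<bar>R x\<bar> + \<bar>d 3 / 6 * (x - 1)^3\<bar> + \<bar>d 4 / 24 * (x - 1)^4\<bar>"
      by (rule order_trans[OF abs_triangle_ineq add_right_mono[OF abs_triangle_ineq]])
    ultimately show ?thesis
      unfolding R_eq distrib_right by linarith
  qed
  moreover have "min \<delta> 1 > 0" "C + \<bar>d 3\<bar> / 6 + \<bar>d 4\<bar> / 24 \<ge> 0"
    using \<delta> C by auto
  ultimately show ?thesis
    by blast
qed

lemma scaled_quadratic_approx:
  fixes f :: "real \<Rightarrow> real"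
  assumes approx: "\<And>x. \<bar>x - 1\<bar> \<le> \<delta> \<Longrightarrow> \<bar>f x - c1 * (x - 1) - c2 * (x - 1)^2\<bar> \<le> C * \<bar>x - 1\<bar>^3"
    and "C \<ge> 0" "0 < m" "m \<le> a" "\<bar>d\<bar> \<le> \<delta> * m"
  shows "\<bar>a * f (1 + d / a) - c1 * d - c2 * d^2 / a\<bar> \<le> C / m^2 * \<bar>d\<bar>^3"
proof -
  have a: "a > 0" using assms(3,4) by simp
  have "0 \<le> \<delta> * m" using assms(5) abs_ge_zero order_trans by blast
  then have "0 \<le> \<delta>" using assms(3) by (simp add: zero_le_mult_iff)
  have "\<bar>d / a\<bar> \<le> \<delta> * m / a"
    using a assms(5) by (simp add: abs_div divide_right_mono)
  also have "\<dots> \<le> \<delta>"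
    using a assms(4) \<open>0 \<le> \<delta>\<close> by (simp add: divide_le_eq mult_left_mono)
  finally have "\<bar>f (1 + d / a) - c1 * (d / a) - c2 * (d / a)^2\<bar> \<le> C * \<bar>d / a\<bar>^3"
    using approx[of "1 + d / a"] by simp
  moreover have "a * f (1 + d / a) - c1 * d - c2 * d^2 / a
      = a * (f (1 + d / a) - c1 * (d / a) - c2 * (d / a)^2)"
    using a by (simp add: field_simps power2_eq_square)
  ultimately have "\<bar>a * f (1 + d / a) - c1 * d - c2 * d^2 / a\<bar> \<le> a * (C * \<bar>d / a\<bar>^3)"
    using a by (simp add: abs_mult)
  also have "\<dots> = C / a^2 * \<bar>d\<bar>^3"
    using a by (simp add: abs_div power_divide field_simps power2_eq_square power3_eq_cube)
  also have "\<dots> \<le> C / m^2 * \<bar>d\<bar>^3"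
    using assms(2-4) by (intro mult_right_mono divide_left_mono power_mono) auto
  finally show ?thesis .
qed

lemma convex_on_nonneg_lower_bound:
  fixes f :: "real \<Rightarrow> real"
  assumes "convex_on {0..} f" "f 1 = 0" "0 \<le> x"
  shows "- ((\<bar>f 0\<bar> + \<bar>f 2\<bar>) * max 1 x) \<le> f x"
proof (cases "x \<le> 1")
  case True
  have "f 1 \<le> (f 2 - f x) / (2 - x) * (1 - x) + f x"
    using True assms by (intro convex_onD_Icc'[OF convex_on_subset[OF assms(1)]]) auto
  then have "0 \<le> f x + (1 - x) * f 2"
    using True assms(2) by (simp add: field_simps)
  moreover have "(1 - x) * f 2 \<le> (1 - x) * \<bar>f 2\<bar>"
    using True by (intro mult_left_mono) auto
  moreover have "(1 - x) * \<bar>f 2\<bar> \<le> \<bar>f 2\<bar>"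
    using True assms(3) by (intro mult_left_le_one_le) auto
  ultimately show ?thesis using True by simp
next
  case False
  have "f 1 \<le> (f x - f 0) / (x - 0) * (1 - 0) + f 0"
    using False assms by (intro convex_onD_Icc'[OF convex_on_subset[OF assms(1)]]) auto
  then have "0 \<le> f x + (x - 1) * f 0"
    using False assms(2) by (simp add: field_simps)
  moreover have "(x - 1) * f 0 \<le> (x - 1) * \<bar>f 0\<bar>"
    using False by (intro mult_left_mono) auto
  moreover have "(x - 1) * \<bar>f 0\<bar> \<le> x * \<bar>f 0\<bar>" "0 \<le> x * \<bar>f 2\<bar>"
    using assms(3) by (auto intro: mult_right_mono)
  ultimately have "- (x * \<bar>f 0\<bar> + x * \<bar>f 2\<bar>) \<le> f x"
    by linarith
  then show ?thesis using False by (simp add: algebra_simps)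
qed

lemma convex_on_nonneg_bounded:
  fixes f :: "real \<Rightarrow> real"
  assumes "convex_on {0..} f" "f 1 = 0"
  shows "\<exists>M. \<forall>x\<in>{0..b}. \<bar>f x\<bar> \<le> M"
proof -
  have "\<bar>f x\<bar> \<le> max \<bar>f 0\<bar> \<bar>f b\<bar> + (\<bar>f 0\<bar> + \<bar>f 2\<bar>) * max 1 b" if x: "x \<in> {0..b}" for x
  proof -
    have "f x \<le> max (f 0) (f b)"
      using x by (intro convex_on_le_max convex_on_subset[OF assms(1)]) auto
    moreover have "- ((\<bar>f 0\<bar> + \<bar>f 2\<bar>) * max 1 x) \<le> f x"
      using x by (intro convex_on_nonneg_lower_bound assms) auto
    moreover have "(\<bar>f 0\<bar> + \<bar>f 2\<bar>) * max 1 x \<le> (\<bar>f 0\<bar> + \<bar>f 2\<bar>) * max 1 b"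
      using x by (intro mult_left_mono) auto
    moreover have "max (f 0) (f b) \<le> max \<bar>f 0\<bar> \<bar>f b\<bar>" "0 \<le> max \<bar>f 0\<bar> \<bar>f b\<bar>"
      and "0 \<le> (\<bar>f 0\<bar> + \<bar>f 2\<bar>) * max 1 b"
      by (auto simp: max_def)
    ultimately show ?thesis
      by (simp only: abs_le_iff) linarith
  qed
  then show ?thesis by blast
qed

section \<open>Asymptotics of the losses\<close>

lemma abs_le_cubic_quartic_sum:
  fixes d :: "'k::finite \<Rightarrow> real"
  assumes "\<delta> > 0" "A \<ge> 0" "C \<ge> 0"
    and near: "\<forall>k. \<bar>d k\<bar> \<le> \<delta> \<Longrightarrow> \<bar>x\<bar> \<le> A * (\<Sum>k\<in>UNIV. \<bar>d k\<bar>^3)"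
    and bounded: "\<bar>x\<bar> \<le> C"
  shows "\<bar>x\<bar> \<le> (A + C / \<delta>^4) * (\<Sum>k\<in>UNIV. \<bar>d k\<bar>^3 + (d k)^4)"
proof -
  define S3 where "S3 = (\<Sum>k\<in>UNIV. \<bar>d k\<bar>^3)"
  define S4 where "S4 = (\<Sum>k\<in>UNIV. (d k)^4)"
  have nonneg: "0 \<le> S3" "0 \<le> S4" "0 \<le> C / \<delta>^4"
    using assms(3) by (auto simp: S3_def S4_def intro: sum_nonneg)
  have split: "(A + C / \<delta>^4) * (\<Sum>k\<in>UNIV. \<bar>d k\<bar>^3 + (d k)^4)
      = A * S3 + A * S4 + C / \<delta>^4 * S3 + C / \<delta>^4 * S4"
    by (simp add: S3_def S4_def sum.distrib algebra_simps)
  have "0 \<le> A * S3" "0 \<le> A * S4" "0 \<le> C / \<delta>^4 * S3" "0 \<le> C / \<delta>^4 * S4"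
    using nonneg assms(2) mult_nonneg_nonneg by blast+
  moreover have "\<bar>x\<bar> \<le> A * S3 \<or> \<bar>x\<bar> \<le> C / \<delta>^4 * S4"
  proof (cases "\<forall>k. \<bar>d k\<bar> \<le> \<delta>")
    case False
    then obtain k where "\<delta> < \<bar>d k\<bar>" by (auto simp: not_le)
    then have "\<delta>^4 \<le> (d k)^4"
      using assms(1) power_mono[of \<delta> "\<bar>d k\<bar>" 4] by simp
    also have "\<dots> \<le> S4"
      unfolding S4_def by (intro member_le_sum) auto
    finally have "C \<le> C / \<delta>^4 * S4"
      using assms(1,3) by (simp add: field_simps mult_left_mono)
    then show ?thesis using bounded by simp
  qed (simp add: near S3_def)
  ultimately show ?thesis
    unfolding split by linarith
qed

lemma tendsto_of_remainder:
  fixes X Y E s :: "nat \<Rightarrow> real"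
  assumes "(\<lambda>n. s n * Y n) \<longlonglongrightarrow> l" "(\<lambda>n. s n * E n) \<longlonglongrightarrow> 0"
    and "eventually (\<lambda>n. \<bar>X n - Y n\<bar> \<le> E n) sequentially" "\<And>n. s n \<ge> 0"
  shows "(\<lambda>n. s n * X n) \<longlonglongrightarrow> l"
proof -
  have "eventually (\<lambda>n. norm (s n * X n - s n * Y n) \<le> s n * E n) sequentially"
    using assms(3) by eventually_elim
      (use assms(4) in \<open>simp add: abs_mult mult_left_mono flip: right_diff_distrib\<close>)
  then have "(\<lambda>n. s n * X n - s n * Y n) \<longlonglongrightarrow> 0"
    using assms(2) by (rule Lim_null_comparison)
  from tendsto_add[OF this assms(1)] show ?thesis by simp
qed

lemma abs_cube_le: "\<epsilon> > 0 \<Longrightarrow> \<bar>x\<bar>^3 \<le> \<epsilon> * x^2 + x^4 / \<epsilon>" for x \<epsilon> :: real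
proof (cases "\<bar>x\<bar> \<le> \<epsilon>")
  case True
  assume "\<epsilon> > 0"
  have "\<bar>x\<bar>^3 = \<bar>x\<bar> * x^2" by (simp add: power2_eq_square power3_eq_cube abs_mult)
  also have "\<dots> \<le> \<epsilon> * x^2" using True by (intro mult_right_mono) auto
  finally show ?thesis using \<open>\<epsilon> > 0\<close> by (simp add: add_increasing2)
next
  case False
  assume "\<epsilon> > 0"
  have "\<epsilon> * \<bar>x\<bar>^3 \<le> \<bar>x\<bar> * \<bar>x\<bar>^3" using False by (intro mult_right_mono) auto
  also have "\<dots> = x^4"
    by (simp add: power4_eq_xxxx power3_eq_cube abs_mult[symmetric] abs_mult_self_eq)
  finally have "\<bar>x\<bar>^3 \<le> x^4 / \<epsilon>" using \<open>\<epsilon> > 0\<close> by (simp add: field_simps)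
  then show ?thesis using \<open>\<epsilon> > 0\<close> by (simp add: add_increasing)
qed

locale channel_estimation =
  fixes p :: "real^'k::finite" and V :: "real^'k^'k" and Proj :: "real^'k \<Rightarrow> real^'k"
  assumes p_prob: "prob_vec p" and p_pos: "\<forall>k. p$k > 0"
    and V_stochastic: "row_stochastic V" and V_invertible: "invertible V"
    and Proj_valid: "valid_proj Proj"
begin

abbreviation q :: "real^'k" where "q \<equiv> p v* V"

lemma p_gt_0: "p$k > 0"
  using p_pos by blast

definition dev :: "'k \<Rightarrow> nat \<Rightarrow> 'k list \<Rightarrow> real" where
  "dev k n ys = (\<Sum>y\<leftarrow>ys. score p V k y) / n"

lemma centered_law: "centered_law q (score p V k)"
  by (rule centered_law_score[OF V_stochastic V_invertible p_prob p_pos])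

lemma q_nonneg: "0 \<le> q$y"
  using centered_law_def centered_law by auto

definition fourth_moment_bound :: "'k \<Rightarrow> real" where
  "fourth_moment_bound k = centered_law.mu4 q (score p V k) + 3 * (score_var p V k)^2"

lemma expect_dev_sq: "n > 0 \<Longrightarrow> seq_expect q n (\<lambda>ys. (dev k n ys)^2) = score_var p V k / n"
  using centered_law.expect_sum_sq[OF centered_law]
  by (simp add: dev_def power_divide seq_expect_divide power2_eq_square
      sigma2_score[OF V_stochastic V_invertible p_prob p_pos])

lemma expect_dev_pow4_le:
  assumes "n > 0"
  shows "seq_expect q n (\<lambda>ys. (dev k n ys)^4) \<le> fourth_moment_bound k / n^2"
proof -
  have "seq_expect q n (\<lambda>ys. (dev k n ys)^4)
      = seq_expect q n (\<lambda>ys. (\<Sum>y\<leftarrow>ys. score p V k y)^4) / real n^4"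
    by (simp add: dev_def power_divide seq_expect_divide)
  also have "\<dots> \<le> fourth_moment_bound k * (real n)^2 / real n^4"
    using centered_law.expect_sum_pow4_le[OF centered_law, of n k]
    by (intro divide_right_mono)
      (auto simp: fourth_moment_bound_def sigma2_score[OF V_stochastic V_invertible p_prob p_pos])
  also have "\<dots> = fourth_moment_bound k / n^2"
    using assms by (simp add: field_simps power2_eq_square power4_eq_xxxx)
  finally show ?thesis .
qed

lemma expect_abs_dev_cube_le:
  assumes "n > 0"
  shows "seq_expect q n (\<lambda>ys. \<bar>dev k n ys\<bar>^3)
    \<le> (score_var p V k + fourth_moment_bound k) / (n * sqrt n)"
proof -
  define \<epsilon> where "\<epsilon> = 1 / sqrt n"
  have \<epsilon>: "\<epsilon> > 0" using assms by (simp add: \<epsilon>_def)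
  note abs_cube_le[OF \<epsilon>]
  then have "seq_expect q n (\<lambda>ys. \<bar>dev k n ys\<bar>^3) \<le>
      \<epsilon> * seq_expect q n (\<lambda>ys. (dev k n ys)^2) + seq_expect q n (\<lambda>ys. (dev k n ys)^4) / \<epsilon>"
using seq_expect_mono[OF q_nonneg] by (simp flip: seq_expect_cmult seq_expect_divide
      seq_expect_add)
  also have "\<dots> \<le> \<epsilon> * (score_var p V k / n) + (fourth_moment_bound k / n^2) / \<epsilon>"
    using expect_dev_sq[OF assms] expect_dev_pow4_le[OF assms] \<epsilon>
    by (intro add_mono divide_right_mono) auto
  also have "\<dots> = (score_var p V k + fourth_moment_bound k) / (n * sqrt n)"
    using assms by (simp add: \<epsilon>_def field_simps power2_eq_square real_sqrt_mult[symmetric])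
  finally show ?thesis .
qed

definition remainder_bound :: "nat \<Rightarrow> real" where
  "remainder_bound n =
     (\<Sum>k\<in>UNIV. (score_var p V k + fourth_moment_bound k) / (n * sqrt n)
        + fourth_moment_bound k / n^2)"

lemma expect_remainder_le:
  assumes "n > 0" "A \<ge> 0"
    and "\<And>ys. length ys = n \<Longrightarrow> \<bar>L ys - \<Phi> ys\<bar> \<le> A * (\<Sum>k\<in>UNIV. \<bar>dev k n ys\<bar>^3 + (dev k n ys)^4)"
  shows "\<bar>seq_expect q n L - seq_expect q n \<Phi>\<bar> \<le> A * remainder_bound n"
proof -
  have "\<bar>seq_expect q n L - seq_expect q n \<Phi>\<bar> = \<bar>seq_expect q n (\<lambda>ys. L ys - \<Phi> ys)\<bar>"
    by (simp add: seq_expect_diff)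
  also have "\<dots> \<le> seq_expect q n (\<lambda>ys. \<bar>L ys - \<Phi> ys\<bar>)"
    by (rule seq_expect_abs_le[OF q_nonneg])
  also have "\<dots> \<le> seq_expect q n (\<lambda>ys. A * (\<Sum>k\<in>UNIV. \<bar>dev k n ys\<bar>^3 + (dev k n ys)^4))"
    using assms(3) by (intro seq_expect_mono q_nonneg)
  also have "\<dots> = A * (\<Sum>k\<in>UNIV. seq_expect q n (\<lambda>ys. \<bar>dev k n ys\<bar>^3)
      + seq_expect q n (\<lambda>ys. (dev k n ys)^4))"
    by (simp add: seq_expect_cmult seq_expect_sum seq_expect_add)
  also have "\<dots> \<le> A * remainder_bound n"
unfolding remainder_bound_def using expect_abs_dev_cube_le[OF assms(1)] expect_dev_pow4_le[OF
      assms(1)] assms(2)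
    by (intro mult_left_mono sum_mono add_mono) auto
  finally show ?thesis .
qed

lemma
  shows remainder_bound_tendsto: "(\<lambda>n. n * remainder_bound n) \<longlonglongrightarrow> 0"
    and remainder_bound_sqrt_tendsto: "(\<lambda>n. sqrt n * remainder_bound n) \<longlonglongrightarrow> 0"
proof -
  have "(\<lambda>n. \<Sum>k\<in>UNIV. real n * ((score_var p V k + fourth_moment_bound k) / (n * sqrt n)
      + fourth_moment_bound k / n^2)) \<longlonglongrightarrow> 0"
    and "(\<lambda>n. \<Sum>k\<in>UNIV. sqrt n * ((score_var p V k + fourth_moment_bound k) / (n * sqrt n)
      + fourth_moment_bound k / n^2)) \<longlonglongrightarrow> 0"
    by (intro tendsto_null_sum; real_asymp)+
  then show "(\<lambda>n. n * remainder_bound n) \<longlonglongrightarrow> 0" "(\<lambda>n. sqrt n * remainder_bound n) \<longlonglongrightarrow> 0"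
    by (simp_all add: remainder_bound_def sum_distrib_left)
qed

definition p_min :: real where "p_min = Min (range (\<lambda>k. p$k))"

lemma p_min_le: "p_min \<le> p$k"
  unfolding p_min_def by (intro Min_le) auto

lemma p_min_pos: "p_min > 0"
  using Min_in[of "range (\<lambda>k. p$k)"] p_pos unfolding p_min_def by auto

definition score_bound :: real where
  "score_bound = (\<Sum>k\<in>UNIV. \<Sum>y\<in>UNIV. \<bar>score p V k y\<bar>)"

lemma score_bound_nonneg: "0 \<le> score_bound"
  unfolding score_bound_def by (intro sum_nonneg) auto

lemma abs_dev_le:
  assumes "length ys = n" "n > 0"
  shows "\<bar>dev k n ys\<bar> \<le> score_bound"
proof -
  have "\<bar>score p V k y\<bar> \<le> score_bound" for y
    unfolding score_bound_def
    by (rule order_trans[OF member_le_sum member_le_sum[of k]]) (auto intro: sum_nonneg)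
  then have "\<bar>\<Sum>y\<leftarrow>ys. score p V k y\<bar> \<le> n * score_bound"
    using assms(1) by (induction ys arbitrary: n)
      (auto simp: distrib_right intro!: order_trans[OF abs_triangle_ineq] add_mono)
  then show ?thesis
    using assms(2) by (simp add: dev_def abs_div field_simps)
qed

lemma emp_dist_matrix_inv_eq:
  "length ys = n \<Longrightarrow> n > 0 \<Longrightarrow> (emp_dist ys v* matrix_inv V)$k = p$k + dev k n ys"
  unfolding dev_def by (rule emp_dist_matrix_inv)

lemma sum_dev:
  assumes "length ys = n" "n > 0"
  shows "(\<Sum>k\<in>UNIV. dev k n ys) = 0"
proof -
  have "1 = (\<Sum>k\<in>UNIV. p$k + dev k n ys)"
using emp_dist_matrix_inv_sum[OF _ V_stochastic V_invertible, of ys] emp_dist_matrix_inv_eq[OF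
      assms] assms
    by auto
  then show ?thesis using p_prob by (simp add: sum.distrib prob_vec_def)
qed

lemma prob_vec_p_hat: "ys \<noteq> [] \<Longrightarrow> prob_vec (p_hat Proj V ys)"
  using Proj_valid emp_dist_matrix_inv_sum[OF _ V_stochastic V_invertible]
  unfolding valid_proj_def p_hat_def by blast

lemma p_hat_eq:
  assumes "length ys = n" "n > 0" "\<forall>k. \<bar>dev k n ys\<bar> \<le> p_min"
  shows "p_hat Proj V ys $ k = p$k + dev k n ys"
proof -
  have "0 \<le> p$k + dev k n ys" for k
    using assms(3)[rule_format, of k] p_min_le[of k] unfolding abs_le_iff by linarith
  then have "prob_vec (emp_dist ys v* matrix_inv V)"
    using emp_dist_matrix_inv_sum[OF _ V_stochastic V_invertible, of ys] assms(1,2)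
    unfolding prob_vec_def by (auto simp: emp_dist_matrix_inv_eq[OF assms(1,2)])
  then show ?thesis
using Proj_valid emp_dist_matrix_inv_eq[OF assms(1,2)] unfolding valid_proj_def p_hat_def by
      simp
qed

lemma abs_p_hat_diff_le_1:
  assumes "ys \<noteq> []"
  shows "\<bar>p_hat Proj V ys $ k - p$k\<bar> \<le> 1"
proof -
  have "0 \<le> p_hat Proj V ys $ k" "p_hat Proj V ys $ k \<le> 1" "0 \<le> p$k" "p$k \<le> 1"
    using prob_vec_p_hat[OF assms] p_prob prob_vec_le_1 unfolding prob_vec_def by auto
  then show ?thesis by (simp add: abs_le_iff)
qed

text \<open>The loss is compared with a surrogate \<open>\<Phi> n\<close> in the deviations \<open>dev\<close>: near the true law
  the two differ by a cubic term in \<open>dev\<close>, and elsewhere the bounded difference is controlled by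
  the fourth moment of \<open>dev\<close> (Markov's inequality).\<close>

lemma loss_tendsto:
  assumes "\<delta> > 0" "A \<ge> 0" "C \<ge> 0"
    and near: "\<And>n ys. n > 0 \<Longrightarrow> length ys = n \<Longrightarrow> \<forall>k. \<bar>dev k n ys\<bar> \<le> \<delta> \<Longrightarrow>
      \<bar>L ys - \<Phi> n ys\<bar> \<le> A * (\<Sum>k\<in>UNIV. \<bar>dev k n ys\<bar>^3)"
    and bounded: "\<And>n ys. n > 0 \<Longrightarrow> length ys = n \<Longrightarrow> \<bar>L ys - \<Phi> n ys\<bar> \<le> C"
    and surrogate: "(\<lambda>n. s n * seq_expect q n (\<Phi> n)) \<longlonglongrightarrow> l"
    and remainder: "(\<lambda>n. s n * remainder_bound n) \<longlonglongrightarrow> 0" and "\<And>n. s n \<ge> 0"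
  shows "(\<lambda>n. s n * seq_expect q n L) \<longlonglongrightarrow> l"
proof (rule tendsto_of_remainder[OF surrogate _ _ \<open>\<And>n. s n \<ge> 0\<close>])
  let ?A = "A + C / \<delta>^4"
  show "(\<lambda>n. s n * (?A * remainder_bound n)) \<longlonglongrightarrow> 0"
    using tendsto_mult_right_zero[OF remainder, of ?A] by (simp add: ac_simps)
  have "\<bar>seq_expect q n L - seq_expect q n (\<Phi> n)\<bar> \<le> ?A * remainder_bound n" if "n > 0" for n
    using that assms(1-3) near bounded
    by (intro expect_remainder_le abs_le_cubic_quartic_sum) (auto simp: add_nonneg_nonneg)
  then show "eventually (\<lambda>n. \<bar>seq_expect q n L - seq_expect q n (\<Phi> n)\<bar> \<le> ?A * remainder_bound n)
      sequentially"
    by (intro eventually_sequentiallyI[of 1]) auto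
qed

lemma seq_expect_eventually_const:
  "(\<And>n. n > 0 \<Longrightarrow> s n * seq_expect q n (\<Phi> n) = l) \<Longrightarrow> (\<lambda>n. s n * seq_expect q n (\<Phi> n)) \<longlonglongrightarrow> l"
  by (rule tendsto_eventually, rule eventually_sequentiallyI[of 1]) auto

lemma mse_tendsto: "(\<lambda>n. n * loss_mse Proj p V n) \<longlonglongrightarrow> (\<Sum>k\<in>UNIV. score_var p V k)"
  unfolding loss_mse_def expected_loss_eq_seq_expect
proof (rule loss_tendsto[OF p_min_pos order_refl, where \<Phi> = "\<lambda>n ys. \<Sum>k\<in>UNIV. (dev k n ys)^2"])
  fix n :: nat and ys :: "'k list" assume n: "n > 0" and ys: "length ys = n"
  then show "\<forall>k. \<bar>dev k n ys\<bar> \<le> p_min \<Longrightarrow>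
      \<bar>(\<Sum>k\<in>UNIV. (p_hat Proj V ys $ k - p$k)^2) - (\<Sum>k\<in>UNIV. (dev k n ys)^2)\<bar>
        \<le> 0 * (\<Sum>k\<in>UNIV. \<bar>dev k n ys\<bar>^3)"
    by (simp add: p_hat_eq)
  have "(\<Sum>k\<in>UNIV. (p_hat Proj V ys $ k - p$k)^2) \<le> (\<Sum>k\<in>(UNIV::'k set). 1)"
    using abs_p_hat_diff_le_1[of ys] n ys by (intro sum_mono) (auto simp: abs_square_le_1)
  moreover have "(\<Sum>k\<in>UNIV. (dev k n ys)^2) \<le> (\<Sum>k\<in>(UNIV::'k set). score_bound^2)"
    using abs_dev_le[OF ys n] by (intro sum_mono) (metis abs_ge_zero power2_abs power_mono)
  moreover have "0 \<le> (\<Sum>k\<in>UNIV. (p_hat Proj V ys $ k - p$k)^2)" "0 \<le> (\<Sum>k\<in>UNIV. (dev k n ys)^2)"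
    by (auto intro: sum_nonneg)
  ultimately show "\<bar>(\<Sum>k\<in>UNIV. (p_hat Proj V ys $ k - p$k)^2) - (\<Sum>k\<in>UNIV. (dev k n ys)^2)\<bar>
      \<le> CARD('k) + CARD('k) * score_bound^2"
    by simp
next
  show "(\<lambda>n. n * seq_expect q n (\<lambda>ys. \<Sum>k\<in>UNIV. (dev k n ys)^2)) \<longlonglongrightarrow> (\<Sum>k\<in>UNIV. score_var p V k)"
    by (rule seq_expect_eventually_const) (simp add: seq_expect_sum expect_dev_sq sum_distrib_left)
qed (auto intro: remainder_bound_tendsto)

lemma tv_tendsto:
  "(\<lambda>n. sqrt n * loss_tv Proj p V n) \<longlonglongrightarrow> sqrt (2 / pi) * (\<Sum>k\<in>UNIV. sqrt (score_var p V k))"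
  unfolding loss_tv_def expected_loss_eq_seq_expect
proof (rule loss_tendsto[OF p_min_pos order_refl, where \<Phi> = "\<lambda>n ys. \<Sum>k\<in>UNIV. \<bar>dev k n ys\<bar>"])
  fix n :: nat and ys :: "'k list" assume n: "n > 0" and ys: "length ys = n"
  then show "\<forall>k. \<bar>dev k n ys\<bar> \<le> p_min \<Longrightarrow>
      \<bar>(\<Sum>k\<in>UNIV. \<bar>p_hat Proj V ys $ k - p$k\<bar>) - (\<Sum>k\<in>UNIV. \<bar>dev k n ys\<bar>)\<bar>
        \<le> 0 * (\<Sum>k\<in>UNIV. \<bar>dev k n ys\<bar>^3)"
    by (simp add: p_hat_eq)
  have "(\<Sum>k\<in>UNIV. \<bar>p_hat Proj V ys $ k - p$k\<bar>) \<le> CARD('k)"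
    using sum_mono[of UNIV "\<lambda>k. \<bar>p_hat Proj V ys $ k - p$k\<bar>" "\<lambda>_. 1"] abs_p_hat_diff_le_1[of ys]
      n ys
    by auto
  moreover have "(\<Sum>k\<in>UNIV. \<bar>dev k n ys\<bar>) \<le> CARD('k) * score_bound"
    using sum_mono[of UNIV "\<lambda>k. \<bar>dev k n ys\<bar>" "\<lambda>_. score_bound"] abs_dev_le[OF ys n] by auto
  moreover have "0 \<le> (\<Sum>k\<in>UNIV. \<bar>p_hat Proj V ys $ k - p$k\<bar>)" "0 \<le> (\<Sum>k\<in>UNIV. \<bar>dev k n ys\<bar>)"
    and "0 \<le> real CARD('k)"
    by (auto intro: sum_nonneg)
  ultimately show "\<bar>(\<Sum>k\<in>UNIV. \<bar>p_hat Proj V ys $ k - p$k\<bar>) - (\<Sum>k\<in>UNIV. \<bar>dev k n ys\<bar>)\<bar>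
      \<le> CARD('k) + CARD('k) * score_bound"
    unfolding abs_diff_le_iff by linarith
next
  have "(\<lambda>n. \<Sum>k\<in>UNIV. seq_expect q n (\<lambda>ys. \<bar>\<Sum>y\<leftarrow>ys. score p V k y\<bar>) / sqrt n)
      \<longlonglongrightarrow> (\<Sum>k\<in>UNIV. sqrt (2 / pi) * sqrt (score_var p V k))"
    using centered_law.expect_abs_sum_tendsto[OF centered_law]
    by (intro tendsto_sum) (simp add: sigma2_score[OF V_stochastic V_invertible p_prob p_pos])
  moreover have "sqrt n * seq_expect q n (\<lambda>ys. \<Sum>k\<in>UNIV. \<bar>dev k n ys\<bar>) =
      (\<Sum>k\<in>UNIV. seq_expect q n (\<lambda>ys. \<bar>\<Sum>y\<leftarrow>ys. score p V k y\<bar>) / sqrt n)" for n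
  proof -
    have "sqrt n * seq_expect q n (\<lambda>ys. \<bar>dev k n ys\<bar>) =
        seq_expect q n (\<lambda>ys. \<bar>\<Sum>y\<leftarrow>ys. score p V k y\<bar>) / sqrt n" for k
      by (cases "n = 0") (simp_all add: dev_def abs_div seq_expect_divide field_simps)
    then show ?thesis by (simp add: seq_expect_sum sum_distrib_left)
  qed
  ultimately show "(\<lambda>n. sqrt n * seq_expect q n (\<lambda>ys. \<Sum>k\<in>UNIV. \<bar>dev k n ys\<bar>))
      \<longlonglongrightarrow> sqrt (2 / pi) * (\<Sum>k\<in>UNIV. sqrt (score_var p V k))"
    by (simp add: sum_distrib_left)
qed (auto intro: remainder_bound_sqrt_tendsto simp: score_bound_nonneg)

lemma p_hat_div_mem:
  assumes "ys \<noteq> []"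
  shows "p_hat Proj V ys $ k / p$k \<in> {0..1 / p_min}"
proof -
  have ph: "0 \<le> p_hat Proj V ys $ k" "p_hat Proj V ys $ k \<le> 1"
    using prob_vec_p_hat[OF assms] prob_vec_le_1 unfolding prob_vec_def by auto
  have "p_hat Proj V ys $ k / p$k \<le> 1 / p$k"
    using ph p_gt_0[of k] by (intro divide_right_mono) auto
  also have "\<dots> \<le> 1 / p_min"
    using p_min_pos p_min_le[of k] by (intro divide_left_mono) auto
  finally show ?thesis using ph p_gt_0[of k] by auto
qed

lemma fdiv_loss_near:
  assumes approx: "\<And>x. \<bar>x - 1\<bar> \<le> \<delta> \<Longrightarrow> \<bar>f x - \<alpha> * (x - 1) - \<beta> * (x - 1)^2\<bar> \<le> C * \<bar>x - 1\<bar>^3"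
    and "C \<ge> 0" "length ys = n" "n > 0"
    and near: "\<forall>k. \<bar>dev k n ys\<bar> \<le> min p_min (\<delta> * p_min)"
  shows "\<bar>(\<Sum>k\<in>UNIV. p$k * f (p_hat Proj V ys $ k / p$k)) - (\<Sum>k\<in>UNIV. \<beta> * (dev k n ys)^2 / p$k)\<bar>
    \<le> C / p_min^2 * (\<Sum>k\<in>UNIV. \<bar>dev k n ys\<bar>^3)"
proof -
  have "p_hat Proj V ys $ k / p$k = 1 + dev k n ys / p$k" for k
    using near p_gt_0[of k] by (simp add: p_hat_eq[OF assms(3,4)] add_divide_distrib)
  then have "(\<Sum>k\<in>UNIV. p$k * f (p_hat Proj V ys $ k / p$k)) - (\<Sum>k\<in>UNIV. \<beta> * (dev k n ys)^2 / p$k) =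
      (\<Sum>k\<in>UNIV. p$k * f (1 + dev k n ys / p$k) - \<alpha> * dev k n ys - \<beta> * (dev k n ys)^2 / p$k)
      + \<alpha> * (\<Sum>k\<in>UNIV. dev k n ys)"
    by (simp add: sum_subtractf sum.distrib sum_distrib_left)
  also have "(\<Sum>k\<in>UNIV. dev k n ys) = 0"
    by (rule sum_dev[OF assms(3,4)])
  finally have "\<bar>(\<Sum>k\<in>UNIV. p$k * f (p_hat Proj V ys $ k / p$k))
        - (\<Sum>k\<in>UNIV. \<beta> * (dev k n ys)^2 / p$k)\<bar> =
      \<bar>\<Sum>k\<in>UNIV. p$k * f (1 + dev k n ys / p$k) - \<alpha> * dev k n ys - \<beta> * (dev k n ys)^2 / p$k\<bar>"
    by simp
  also have "\<dots> \<le> (\<Sum>k\<in>UNIV. C / p_min^2 * \<bar>dev k n ys\<bar>^3)"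
using near by (intro order_trans[OF sum_abs] sum_mono scaled_quadratic_approx[OF approx assms(2)
      p_min_pos])
      (auto simp: p_min_le)
  finally show ?thesis
    by (simp add: sum_distrib_left)
qed

lemma fdiv_loss_bounded:
  fixes f :: "real \<Rightarrow> real" and M \<beta> :: real
  assumes M: "\<And>x. x \<in> {0..1 / p_min} \<Longrightarrow> \<bar>f x\<bar> \<le> M" and ys: "length ys = n" and n: "n > 0"
  shows "\<bar>(\<Sum>k\<in>UNIV. p$k * f (p_hat Proj V ys $ k / p$k)) - (\<Sum>k\<in>UNIV. \<beta> * (dev k n ys)^2 / p$k)\<bar>
    \<le> CARD('k) * M + CARD('k) * (\<bar>\<beta>\<bar> * score_bound^2 / p_min)"
proof -
  have "\<bar>p$k * f (p_hat Proj V ys $ k / p$k)\<bar> \<le> M" for k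
  proof -
    have "\<bar>f (p_hat Proj V ys $ k / p$k)\<bar> \<le> M" using M p_hat_div_mem n ys by auto
    moreover have "p$k * \<bar>f (p_hat Proj V ys $ k / p$k)\<bar> \<le> \<bar>f (p_hat Proj V ys $ k / p$k)\<bar>"
      using p_gt_0[of k] prob_vec_le_1[OF p_prob, of k] by (intro mult_left_le_one_le) auto
    ultimately show ?thesis
      using p_gt_0[of k] by (simp add: abs_mult)
  qed
  then have "\<bar>\<Sum>k\<in>UNIV. p$k * f (p_hat Proj V ys $ k / p$k)\<bar> \<le> CARD('k) * M"
    by (intro order_trans[OF sum_abs sum_bounded_above])
  moreover have "\<bar>\<beta> * (dev k n ys)^2 / p$k\<bar> \<le> \<bar>\<beta>\<bar> * score_bound^2 / p_min" for k
  proof -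
    have "(dev k n ys)^2 \<le> score_bound^2"
      using abs_dev_le[OF ys n] by (metis abs_ge_zero power2_abs power_mono)
    then have "\<bar>\<beta>\<bar> * (dev k n ys)^2 / p$k \<le> \<bar>\<beta>\<bar> * score_bound^2 / p_min"
      using p_min_pos p_min_le[of k] by (intro frac_le mult_left_mono) auto
    then show ?thesis
      using p_gt_0[of k] by (simp add: abs_mult abs_div)
  qed
  then have "\<bar>\<Sum>k\<in>UNIV. \<beta> * (dev k n ys)^2 / p$k\<bar> \<le> CARD('k) * (\<bar>\<beta>\<bar> * score_bound^2 / p_min)"
    by (intro order_trans[OF sum_abs sum_bounded_above])
  ultimately show ?thesis
    by (intro order_trans[OF abs_triangle_ineq4] add_mono)
qed

lemma fdiv_tendsto:
  assumes "admissible_f f"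
  shows "(\<lambda>n. n * loss_fdiv f Proj p V n)
           \<longlonglongrightarrow> (deriv ^^ 2) f 1 / 2 * (\<Sum>k\<in>UNIV. score_var p V k / p$k)"
proof -
  define c2 where "c2 = (deriv ^^ 2) f 1 / 2"
  obtain \<delta> C c1 where \<delta>: "\<delta> > 0" and C: "C \<ge> 0" and approx: "\<And>x. \<bar>x - 1\<bar> \<le> \<delta> \<Longrightarrow>
      \<bar>f x - c1 * (x - 1) - c2 * (x - 1)^2\<bar> \<le> C * \<bar>x - 1\<bar>^3"
    using admissible_f_quadratic_approx[OF assms] unfolding c2_def by blast
  have "convex_on {0..} f" "f 1 = 0"
    using assms unfolding admissible_f_def by auto
  then obtain M where M: "\<And>x. x \<in> {0..1 / p_min} \<Longrightarrow> \<bar>f x\<bar> \<le> M"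
    using convex_on_nonneg_bounded by blast
  have "0 \<le> CARD('k) * M + CARD('k) * (\<bar>c2\<bar> * score_bound^2 / p_min)"
    using M[of 0] p_min_pos by (intro add_nonneg_nonneg mult_nonneg_nonneg divide_nonneg_pos) auto
  moreover have "(\<lambda>n. n * seq_expect q n (\<lambda>ys. \<Sum>k\<in>UNIV. c2 * (dev k n ys)^2 / p$k))
      \<longlonglongrightarrow> c2 * (\<Sum>k\<in>UNIV. score_var p V k / p$k)"
    by (rule seq_expect_eventually_const)
      (simp add: seq_expect_sum seq_expect_cmult seq_expect_divide expect_dev_sq sum_distrib_left)
  ultimately show ?thesis
    unfolding loss_fdiv_def expected_loss_eq_seq_expect c2_def[symmetric]
    using \<delta> C p_min_pos fdiv_loss_bounded[where f = f and M = M, OF M]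
      fdiv_loss_near[where f = f and \<delta> = \<delta> and \<alpha> = c1 and \<beta> = c2 and C = C, OF approx C]
    by (intro loss_tendsto[where \<delta> = "min p_min (\<delta> * p_min)" and A = "C / p_min^2"
          and C = "CARD('k) * M + CARD('k) * (\<bar>c2\<bar> * score_bound^2 / p_min)"
          and \<Phi> = "\<lambda>n ys. \<Sum>k\<in>UNIV. c2 * (dev k n ys)^2 / p$k"] remainder_bound_tendsto)
      auto
qed

end

lemma score_var_mat_1:
  assumes "prob_vec p"
  shows "score_var p (mat 1) k = p$k * (1 - p$k)"
proof -
  have "(p v* mat 1)$y * (score p (mat 1) k y)^2
      = (if y = k then p$k * (1 - 2 * p$k) else 0) + (p$k)^2 * p$y"
    for y
    unfolding score_def matrix_inv_mat_1 vector_matrix_mul_rid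
    by (auto simp: mat_def power2_eq_square algebra_simps)
  then have "score_var p (mat 1) k = p$k * (1 - 2 * p$k) + (p$k)^2 * (\<Sum>y\<in>UNIV. p$y)"
    by (simp add: score_var_def sum.distrib sum_distrib_left)
  then show ?thesis
    using assms by (simp add: prob_vec_def power2_eq_square algebra_simps)
qed

lemma tendsto_divide_scaled:
  fixes X Y s :: "nat \<Rightarrow> real"
  assumes "(\<lambda>n. s n * X n) \<longlonglongrightarrow> a" "(\<lambda>n. s n * Y n) \<longlonglongrightarrow> b" "b \<noteq> 0"
    and "eventually (\<lambda>n. s n \<noteq> 0) sequentially"
  shows "(\<lambda>n. X n / Y n) \<longlonglongrightarrow> a / b"
proof -
  have "(\<lambda>n. (s n * X n) / (s n * Y n)) \<longlonglongrightarrow> a / b"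
    by (rule tendsto_divide[OF assms(1-3)])
  moreover have "eventually (\<lambda>n. (s n * X n) / (s n * Y n) = X n / Y n) sequentially"
    using assms(4) by eventually_elim simp
  ultimately show ?thesis by (simp add: tendsto_cong)
qed

lemma ratio_square_mono:
  fixes x y c :: real
  assumes "0 \<le> x" "x \<le> y" "0 < c"
  shows "(x / c)^2 \<le> (y / c)^2 \<and> ((y / c)^2 = (x / c)^2 \<longleftrightarrow> y = x)"
proof -
  have "0 \<le> x / c" "x / c \<le> y / c" "0 \<le> y / c"
    using assms by (auto intro: divide_right_mono)
  then show ?thesis
    using assms(3) by (simp add: power_mono power2_eq_iff_nonneg)
qed

lemma eventually_real_neq_0: "eventually (\<lambda>n. real n \<noteq> 0) sequentially"
  and eventually_sqrt_neq_0: "eventually (\<lambda>n. sqrt (real n) \<noteq> 0) sequentially"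
  by (auto intro: eventually_sequentiallyI[of 1])

context channel_estimation
begin

lemma channel_estimation_mat_1: "channel_estimation p (mat 1) Proj"
  using p_prob p_pos Proj_valid
  by unfold_locales (auto simp: row_stochastic_mat_1 invertible_mat_1)

context
  assumes card: "CARD('k) \<ge> 2"
begin

lemma alpha_mse_eq:
  "alpha_mse Proj p V = (\<Sum>k\<in>UNIV. score_var p V k) / (\<Sum>k\<in>UNIV. p$k * (1 - p$k))"
proof -
  have pos: "0 < (\<Sum>k\<in>UNIV. score_var p (mat 1) k)"
using prob_vec_lt_1[OF card p_prob p_pos] p_gt_0 by (intro sum_pos) (auto simp:
      score_var_mat_1[OF p_prob])
  have "(\<lambda>n. loss_mse Proj p V n / loss_mse Proj p (mat 1) n)
      \<longlonglongrightarrow> (\<Sum>k\<in>UNIV. score_var p V k) / (\<Sum>k\<in>UNIV. score_var p (mat 1) k)"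
by (rule tendsto_divide_scaled[OF mse_tendsto channel_estimation.mse_tendsto[OF
      channel_estimation_mat_1]
          _ eventually_real_neq_0]) (use pos in simp)
  then show ?thesis
    unfolding alpha_mse_def by (simp add: limI score_var_mat_1[OF p_prob])
qed

lemma alpha_tv_eq:
  "alpha_tv Proj p V =
     ((\<Sum>k\<in>UNIV. sqrt (score_var p V k)) / (\<Sum>k\<in>UNIV. sqrt (p$k * (1 - p$k))))^2"
proof -
  have pos: "0 < (\<Sum>k\<in>UNIV. sqrt (score_var p (mat 1) k))"
using prob_vec_lt_1[OF card p_prob p_pos] p_gt_0 by (intro sum_pos) (auto simp:
      score_var_mat_1[OF p_prob])
  have "(\<lambda>n. loss_tv Proj p V n / loss_tv Proj p (mat 1) n) \<longlonglongrightarrow>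
      (sqrt (2 / pi) * (\<Sum>k\<in>UNIV. sqrt (score_var p V k))) /
      (sqrt (2 / pi) * (\<Sum>k\<in>UNIV. sqrt (score_var p (mat 1) k)))"
by (rule tendsto_divide_scaled[OF tv_tendsto channel_estimation.tv_tendsto[OF
      channel_estimation_mat_1]
          _ eventually_sqrt_neq_0]) (use pos in simp)
  then have "(\<lambda>n. (loss_tv Proj p V n / loss_tv Proj p (mat 1) n)^2) \<longlonglongrightarrow>
      ((\<Sum>k\<in>UNIV. sqrt (score_var p V k)) / (\<Sum>k\<in>UNIV. sqrt (score_var p (mat 1) k)))^2"
    by (intro tendsto_power) simp
  then show ?thesis
    unfolding alpha_tv_def by (simp add: limI score_var_mat_1[OF p_prob])
qed

lemma alpha_fdiv_eq:
  assumes "admissible_f f"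
  shows "alpha_fdiv f Proj p V = (\<Sum>k\<in>UNIV. score_var p V k / p$k) / (\<Sum>k\<in>UNIV. 1 - p$k)"
proof -
  have c2: "(deriv ^^ 2) f 1 / 2 \<noteq> 0"
    using assms unfolding admissible_f_def by simp
  have pos: "0 < (\<Sum>k\<in>UNIV. score_var p (mat 1) k / p$k)"
    using prob_vec_lt_1[OF card p_prob p_pos] p_gt_0
    by (intro sum_pos) (auto simp: score_var_mat_1[OF p_prob] p_gt_0[THEN less_imp_neq, symmetric])
  have "(\<lambda>n. loss_fdiv f Proj p V n / loss_fdiv f Proj p (mat 1) n) \<longlonglongrightarrow>
      ((deriv ^^ 2) f 1 / 2 * (\<Sum>k\<in>UNIV. score_var p V k / p$k)) /
      ((deriv ^^ 2) f 1 / 2 * (\<Sum>k\<in>UNIV. score_var p (mat 1) k / p$k))"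
    by (rule tendsto_divide_scaled[OF fdiv_tendsto[OF assms]
          channel_estimation.fdiv_tendsto[OF channel_estimation_mat_1 assms] _
          eventually_real_neq_0])
      (use pos c2 in simp)
  moreover have "score_var p (mat 1) k / p$k = 1 - p$k" for k
    using p_gt_0[of k] by (simp add: score_var_mat_1[OF p_prob])
  ultimately show ?thesis
    unfolding alpha_fdiv_def using c2 by (simp add: limI)
qed

end

end

context two_channels
begin

lemma sum_score_var_mono:
  fixes g :: "'k \<Rightarrow> real \<Rightarrow> real"
  assumes "\<And>k. strict_mono_on {0..} (g k)"
  shows "(\<Sum>k\<in>UNIV. g k (score_var p W k)) \<le> (\<Sum>k\<in>UNIV. g k (score_var p (W ** W') k))"
    and "(\<Sum>k\<in>UNIV. g k (score_var p (W ** W') k)) = (\<Sum>k\<in>UNIV. g k (score_var p W k)) \<longleftrightarrow>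
         permutation_matrix W'"
proof -
  have nonneg: "0 \<le> score_var p W k" "score_var p W k \<le> score_var p (W ** W') k" for k
    using score_var_nonneg[OF W_stochastic W_invertible p_prob p_pos] excess_var_nonneg
    by (auto simp: score_var_mult)
  then have le: "g k (score_var p W k) \<le> g k (score_var p (W ** W') k)" for k
    by (intro strict_mono_on_leD[OF assms]) (auto intro: order_trans)
  then show "(\<Sum>k\<in>UNIV. g k (score_var p W k)) \<le> (\<Sum>k\<in>UNIV. g k (score_var p (W ** W') k))"
    by (rule sum_mono)
  have "g k (score_var p (W ** W') k) = g k (score_var p W k) \<longleftrightarrow> excess_var k = 0" for k
  proof
    assume "g k (score_var p (W ** W') k) = g k (score_var p W k)"
    then have "score_var p W k = score_var p (W ** W') k"
      by (rule strict_mono_on_eqD[OF assms]) (use nonneg[of k] in auto)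
    then show "excess_var k = 0" by (simp add: score_var_mult)
  qed (simp add: score_var_mult)
  moreover have "(\<Sum>k\<in>UNIV. g k (score_var p (W ** W') k)) = (\<Sum>k\<in>UNIV. g k (score_var p W k)) \<longleftrightarrow>
      (\<forall>k. g k (score_var p (W ** W') k) = g k (score_var p W k))"
  proof
    assume eq: "(\<Sum>k\<in>UNIV. g k (score_var p (W ** W') k)) = (\<Sum>k\<in>UNIV. g k (score_var p W k))"
    have "g k (score_var p W k) = g k (score_var p (W ** W') k)" for k
      by (rule sum_mono_inv[OF eq[symmetric]]) (simp_all add: le)
    then show "\<forall>k. g k (score_var p (W ** W') k) = g k (score_var p W k)"
      by simp
  qed simp
  ultimately show "(\<Sum>k\<in>UNIV. g k (score_var p (W ** W') k)) = (\<Sum>k\<in>UNIV. g k (score_var p W k)) \<longleftrightarrow>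
      permutation_matrix W'"
    by (simp add: excess_var_eq_0_iff_permutation_matrix)
qed

end

theorem corollary6:
  fixes p :: "real^'k::finite" and W W' :: "real^'k^'k"
    and f :: "real \<Rightarrow> real" and Proj :: "real^'k \<Rightarrow> real^'k"
  assumes "CARD('k) \<ge> 2"
    and "prob_vec p" and "\<forall>k. p$k > 0"
    and "row_stochastic W" and "invertible W"
    and "row_stochastic W'" and "invertible W'"
    and "admissible_f f"
    and "valid_proj Proj"
  shows "alpha_fdiv f Proj p (W ** W') \<ge> alpha_fdiv f Proj p W \<and>
         (alpha_fdiv f Proj p (W ** W') = alpha_fdiv f Proj p W \<longleftrightarrow> permutation_matrix W') \<and>
         alpha_mse Proj p (W ** W') \<ge> alpha_mse Proj p W \<and>
         (alpha_mse Proj p (W ** W') = alpha_mse Proj p W \<longleftrightarrow> permutation_matrix W') \<and>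
         alpha_tv Proj p (W ** W') \<ge> alpha_tv Proj p W \<and>
         (alpha_tv Proj p (W ** W') = alpha_tv Proj p W \<longleftrightarrow> permutation_matrix W')"
proof -
  interpret two_channels p W W' using assms by unfold_locales
  interpret W: channel_estimation p W Proj using assms by unfold_locales
  interpret WW': channel_estimation p "W ** W'" Proj
    using assms by unfold_locales (auto intro: row_stochastic_mult invertible_mult)
  have mono: "strict_mono_on {0..} (\<lambda>x::real. x)" "strict_mono_on {0..} sqrt"
    "strict_mono_on {0..} (\<lambda>x. x / p$k)" for k
    using assms(3) by (auto simp: strict_mono_on_def divide_strict_right_mono)
  have "0 < p$k * (1 - p$k)" "0 < 1 - p$k" for k
    using prob_vec_lt_1[OF assms(1-3)] assms(3) by auto
  then have denominators: "0 < (\<Sum>k\<in>UNIV. p$k * (1 - p$k))"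
    "0 < (\<Sum>k\<in>UNIV. 1 - p$k)" "0 < (\<Sum>k\<in>UNIV. sqrt (p$k * (1 - p$k)))"
    by (auto intro!: sum_pos)
  have "0 \<le> (\<Sum>k\<in>UNIV. sqrt (score_var p W k))"
    using score_var_nonneg[OF assms(4,5,2,3)] by (intro sum_nonneg) simp
  then show ?thesis
    using denominators sum_score_var_mono[OF mono(1)] sum_score_var_mono[OF mono(3)] sum_score_var_mono[OF mono(2)]
      ratio_square_mono[OF \<open>0 \<le> (\<Sum>k\<in>UNIV. sqrt (score_var p W k))\<close> _ denominators(3)]
    by (simp add: W.alpha_mse_eq[OF assms(1)] WW'.alpha_mse_eq[OF assms(1)] W.alpha_tv_eq[OF assms(1)]
        WW'.alpha_tv_eq[OF assms(1)] W.alpha_fdiv_eq[OF assms(1,8)] WW'.alpha_fdiv_eq[OF assms(1,8)]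
        divide_right_mono)
qed

end
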